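(* Let $\mathcal{P}$ be one of the following three point sets in $\mathbb{R}^3$ (the vertices of a regular tetrahedron, of a regular octahedron, or of a cube, all centred at the origin): (a) $q_1=(1,1,1)$, $q_2=(-1,-1,1)$, $q_3=(-1,1,-1)$, $q_4=(1,-1,-1)$ $(n=4)$; (b) $q_1=(1,0,0)$, $q_2=(-1,0,0)$, $q_3=(0,1,0)$, $q_4=(0,-1,0)$, $q_5=(0,0,1)$, $q_6=(0,0,-1)$ $(n=6)$; (c) the eight points $q_1,\dots,q_8$ of the form $(\pm1,\pm1,\pm1)$ $(n=8)$. For $t\in(0,1)$ consider the configuration of $2n$ points $q_1,\dots,q_n,q_{n+1}=tq_1,\dots,q_{2n}=tq_n$ (two nested homothetic copies of the same polyhedron with ratio of edges $t$). Then in each of the three cases there exists $\delta\in(0,1)$ such that: for every $t\in(0,\delta)$ there exist positive masses $m_1,\dots,m_{2n}$ for which this configuration is a central configuration, and for every $t\in(\delta,1)$ there are no positive masses $m_1,\dots,m_{2n}$ for which this configuration is a central configuration.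
   Context: A configuration $q=(q_1,\dots,q_N)$ of distinct points $q_i\in\mathbb{R}^3$ with masses $m_1,\dots,m_N$ is called a central configuration if there exists a constant $c\in\mathbb{R}$ such that $\sum_{j\neq i} m_j\left(\frac{1}{|q_j-q_i|^3}-c\right)(q_j-q_i)=0$ for all $i=1,\dots,N$. (For nonzero total mass this is equivalent to the existence of $\lambda\in\mathbb{R}$ with $-\lambda(q_i-q_0)=\sum_{j\neq i}m_j\frac{q_j-q_i}{|q_j-q_i|^3}$ for all $i$, where $q_0$ is the center of mass.) *)

theory Defs
  imports "HOL-Analysis.Analysis"
begin

definition central_configuration :: "(real^3) list \<Rightarrow> real list \<Rightarrow> bool" where
  "central_configuration q m \<longleftrightarrow>
     length m = length q \<and> distinct q \<and>
     (\<exists>c::real. \<forall>i<length q.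
        (\<Sum>j\<in>{..<length q} - {i}.
           (m!j * (1 / norm (q!j - q!i) ^ 3 - c)) *\<^sub>R (q!j - q!i)) = 0)"

definition pt :: "real \<Rightarrow> real \<Rightarrow> real \<Rightarrow> real^3" where
  "pt a b c = vector [a, b, c]"

definition tetrahedron :: "(real^3) list" where
  "tetrahedron = [pt 1 1 1, pt (-1) (-1) 1, pt (-1) 1 (-1), pt 1 (-1) (-1)]"

definition octahedron :: "(real^3) list" where
  "octahedron = [pt 1 0 0, pt (-1) 0 0, pt 0 1 0, pt 0 (-1) 0, pt 0 0 1, pt 0 0 (-1)]"

definition cube :: "(real^3) list" where
  "cube = [pt 1 1 1, pt 1 1 (-1), pt 1 (-1) 1, pt 1 (-1) (-1),
           pt (-1) 1 1, pt (-1) 1 (-1), pt (-1) (-1) 1, pt (-1) (-1) (-1)]"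

definition nested :: "(real^3) list \<Rightarrow> real \<Rightarrow> (real^3) list" where
  "nested P t = P @ map (\<lambda>x. t *\<^sub>R x) P"

end

theory Submission
  imports Defs
begin

text \<open>By symmetry one may put mass \<open>1\<close> on the outer and mass \<open>\<mu>\<close> on the inner copy of the
  polyhedron; the equations then reduce to those at \<open>q\<^sub>1\<close> and at \<open>t q\<^sub>1\<close>, which read
  \<open>K c (1 + \<mu>) = A + \<mu> B(t)\<close> and \<open>K c t\<^sup>2 (1 + \<mu>) = C(t) + \<mu> A / t\<close>. Here \<open>A\<close>, \<open>B(t)\<close>, \<open>C(t)\<close>
  are the radial attractions of the outer copy on \<open>q\<^sub>1\<close>, of the inner copy on \<open>q\<^sub>1\<close> and of the
  outer copy on \<open>t q\<^sub>1\<close>. Eliminating \<open>c\<close> gives \<open>\<mu> (A - t\<^sup>3 B(t)) = t (t\<^sup>2 A - C(t))\<close>. One shows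
  \<open>C(t) < t\<^sup>2 A\<close> on \<open>(0, 1)\<close> and that \<open>t\<^sup>3 B(t)\<close> increases and crosses \<open>A\<close> at some \<open>\<delta>\<close>; so
  \<open>\<mu> > 0\<close> exists exactly for \<open>t < \<delta>\<close>. For \<open>t > \<delta>\<close> no positive masses whatsoever work: pairing
  the equation at \<open>q\<^sub>i\<close> with \<open>t\<^sup>2 q\<^sub>i\<close> on the outer and with \<open>-q\<^sub>i\<close> on the inner copy and summing,
  \<open>c\<close> cancels and each outer (inner) mass gets the coefficient \<open>C(t) - t\<^sup>2 A\<close> (\<open>A / t - t\<^sup>2 B(t)\<close>),
  both of which are then negative.\<close>

lemma pt_nth [simp]: "pt a b c $ 1 = a" "pt a b c $ 2 = b" "pt a b c $ 3 = c"
  by (simp_all add: pt_def)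

lemma pt_eq_iff [simp]: "pt a b c = pt d e f \<longleftrightarrow> a = d \<and> b = e \<and> c = f"
  by (auto simp: vec_eq_iff forall_3)

lemma pt_eq_0_iff [simp]: "pt a b c = 0 \<longleftrightarrow> a = 0 \<and> b = 0 \<and> c = 0"
  by (auto simp: vec_eq_iff forall_3)

lemma inner_pt [simp]: "pt a b c \<bullet> pt d e f = a * d + b * e + c * f"
  by (simp add: inner_vec_def sum_3)

lemma diff_pt: "pt a b c - pt d e f = pt (a - d) (b - e) (c - f)"
  by (simp add: vec_eq_iff forall_3)

lemma inner_vec3: "(v::real^3) \<bullet> w = v$1 * w$1 + v$2 * w$2 + v$3 * w$3"
  by (simp add: inner_vec_def sum_3)

definition inv_sqrt_cube :: "real \<Rightarrow> real" where
  "inv_sqrt_cube s = 1 / sqrt s ^ 3"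

lemma inverse_norm_cube_eq:
  "1 / norm x ^ 3 = inv_sqrt_cube (x \<bullet> x)"
  by (simp add: inv_sqrt_cube_def norm_eq_sqrt_inner)

lemma inverse_norm_cube_diff_scaleR [simp]:
  "1 / norm (x - t *\<^sub>R y) ^ 3 = inv_sqrt_cube (t * t * (y \<bullet> y) - 2 * t * (x \<bullet> y) + x \<bullet> x)"
  "1 / norm (t *\<^sub>R y - x) ^ 3 = inv_sqrt_cube (t * t * (y \<bullet> y) - 2 * t * (x \<bullet> y) + x \<bullet> x)"
  by (simp_all add: inverse_norm_cube_eq inner_diff_left inner_diff_right inner_commute algebra_simps)

lemma inverse_norm_cube_diff_pt [simp]:
  "1 / norm (pt a b c - pt d e f) ^ 3 = inv_sqrt_cube ((a - d) * (a - d) + (b - e) * (b - e) + (c - f) * (c - f))"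
  by (simp add: inverse_norm_cube_eq diff_pt)

lemma inv_sqrt_cube_mult_square:
  "0 < t \<Longrightarrow> inv_sqrt_cube (a * (t * t)) = inv_sqrt_cube a / t ^ 3"
  by (simp add: inv_sqrt_cube_def real_sqrt_mult power_mult_distrib)

text \<open>The term \<open>j = i\<close> vanishes, so the sum may run over all indices.\<close>

definition cc_residual :: "(real^3) list \<Rightarrow> real list \<Rightarrow> real \<Rightarrow> nat \<Rightarrow> real^3" where
  "cc_residual q m c i = (\<Sum>j<length q. (m!j * (1 / norm (q!j - q!i) ^ 3 - c)) *\<^sub>R (q!j - q!i))"

lemma central_configuration_iff_residual:
  "central_configuration q m \<longleftrightarrow>
     length m = length q \<and> distinct q \<and> (\<exists>c. \<forall>i<length q. cc_residual q m c i = 0)"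
proof -
  have "(\<Sum>j\<in>{..<length q} - {i}. (m!j * (1 / norm (q!j - q!i) ^ 3 - c)) *\<^sub>R (q!j - q!i))
        = cc_residual q m c i" if "i < length q" for i c
    using that by (simp add: cc_residual_def sum_diff1)
  then show ?thesis
    unfolding central_configuration_def by auto
qed

section \<open>Symmetries\<close>

definition signed_perm :: "real \<Rightarrow> real \<Rightarrow> real \<Rightarrow> 3 \<Rightarrow> 3 \<Rightarrow> 3 \<Rightarrow> real^3 \<Rightarrow> real^3" where
  "signed_perm s1 s2 s3 k1 k2 k3 v = pt (s1 * v$k1) (s2 * v$k2) (s3 * v$k3)"

lemma signed_perm_pt [simp]:
  "signed_perm s1 s2 s3 k1 k2 k3 (pt a b c) = pt (s1 * pt a b c $ k1) (s2 * pt a b c $ k2) (s3 * pt a b c $ k3)"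
  by (simp add: signed_perm_def)

lemma orthogonal_transformation_signed_perm [simp]:
  assumes "s1 * s1 = 1" "s2 * s2 = 1" "s3 * s3 = 1" "distinct [k1, k2, k3]"
  shows "orthogonal_transformation (signed_perm s1 s2 s3 k1 k2 k3)"
  unfolding orthogonal_transformation_def
proof (intro conjI allI)
  show "linear (signed_perm s1 s2 s3 k1 k2 k3)"
    by (rule linearI) (simp_all add: signed_perm_def vec_eq_iff forall_3 algebra_simps)
  fix v w :: "real^3"
  have "signed_perm s1 s2 s3 k1 k2 k3 v \<bullet> signed_perm s1 s2 s3 k1 k2 k3 w
        = (s1 * s1) * (v$k1 * w$k1) + (s2 * s2) * (v$k2 * w$k2) + (s3 * s3) * (v$k3 * w$k3)"
    by (simp add: signed_perm_def algebra_simps)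
  also have "\<dots> = v$k1 * w$k1 + v$k2 * w$k2 + v$k3 * w$k3"
    using assms(1-3) by simp
  also have "\<dots> = v \<bullet> w"
    using exhaust_3[of k1] exhaust_3[of k2] exhaust_3[of k3] assms(4)
    by (auto simp: inner_vec3)
  finally show "signed_perm s1 s2 s3 k1 k2 k3 v \<bullet> signed_perm s1 s2 s3 k1 k2 k3 w = v \<bullet> w" .
qed

definition point_symmetry :: "(real^3) list \<Rightarrow> nat list \<Rightarrow> (real^3 \<Rightarrow> real^3) \<Rightarrow> bool" where
  "point_symmetry q \<sigma> g \<longleftrightarrow> orthogonal_transformation g \<and> distinct \<sigma> \<and> length \<sigma> = length q \<and>
     set \<sigma> \<subseteq> {..<length q} \<and> (\<forall>j<length q. q ! (\<sigma> ! j) = g (q ! j))"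

lemma point_symmetry_bij:
  assumes "point_symmetry q \<sigma> g"
  shows "bij_betw ((!) \<sigma>) {..<length q} {..<length q}"
proof -
  have "set \<sigma> = {..<length q}"
    using assms by (auto simp: point_symmetry_def distinct_card card_subset_eq)
  then show ?thesis
    using bij_betw_nth[of \<sigma>] assms by (simp add: point_symmetry_def)
qed

lemma point_symmetry_nth_less:
  "point_symmetry q \<sigma> g \<Longrightarrow> j < length q \<Longrightarrow> \<sigma> ! j < length q"
  unfolding point_symmetry_def by (metis lessThan_iff nth_mem subsetD)

lemma cc_residual_symmetry:
  assumes sym: "point_symmetry q \<sigma> g"
    and masses: "\<And>j. j < length q \<Longrightarrow> m ! (\<sigma> ! j) = m ! j"
    and i: "i < length q"
  shows "cc_residual q m c (\<sigma> ! i) = g (cc_residual q m c i)"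
proof -
  have g: "orthogonal_transformation g" and q: "\<And>j. j < length q \<Longrightarrow> q ! (\<sigma> ! j) = g (q ! j)"
    using sym by (auto simp: point_symmetry_def)
  have lin: "linear g"
    using g by (rule orthogonal_transformation_linear)
  let ?F = "\<lambda>j. (m!j * (1 / norm (q!j - q!(\<sigma>!i)) ^ 3 - c)) *\<^sub>R (q!j - q!(\<sigma>!i))"
  have "cc_residual q m c (\<sigma> ! i) = (\<Sum>j<length q. ?F (\<sigma> ! j))"
    unfolding cc_residual_def using sum.reindex_bij_betw[OF point_symmetry_bij[OF sym], of ?F] by simp
  also have "\<dots> = (\<Sum>j<length q. g ((m!j * (1 / norm (q!j - q!i) ^ 3 - c)) *\<^sub>R (q!j - q!i)))"
  proof (rule sum.cong[OF refl])
    fix j assume "j \<in> {..<length q}"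
    then have "q ! (\<sigma> ! j) - q ! (\<sigma> ! i) = g (q ! j - q ! i)"
      using q i lin by (simp add: linear_diff)
    then show "?F (\<sigma> ! j) = g ((m!j * (1 / norm (q!j - q!i) ^ 3 - c)) *\<^sub>R (q!j - q!i))"
      using masses \<open>j \<in> {..<length q}\<close> g
      by (simp add: orthogonal_transformation_norm orthogonal_transformation_scaleR)
  qed
  also have "\<dots> = g (cc_residual q m c i)"
    by (simp add: cc_residual_def linear_sum[OF lin])
  finally show ?thesis .
qed

definition vertex_transitive :: "(real^3) list \<Rightarrow> bool" where
  "vertex_transitive P \<longleftrightarrow> (\<forall>i<length P. \<exists>\<sigma> g. point_symmetry P \<sigma> g \<and> \<sigma> ! 0 = i)"

lemma vertex_transitiveI:
  assumes "list_all (\<lambda>(\<sigma>, g). point_symmetry P \<sigma> g) S"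
    and "map (\<lambda>(\<sigma>, g). \<sigma> ! 0) S = [0..<length P]"
  shows "vertex_transitive P"
  unfolding vertex_transitive_def
proof (intro allI impI)
  fix i assume i: "i < length P"
  then have "i < length S"
    using arg_cong[OF assms(2), of length] by simp
  obtain \<sigma> g where Si: "S ! i = (\<sigma>, g)"
    by fastforce
  have "point_symmetry P \<sigma> g"
    using assms(1) \<open>i < length S\<close> Si unfolding list_all_length by fastforce
  moreover have "\<sigma> ! 0 = i"
    using arg_cong[OF assms(2), of "\<lambda>xs. xs ! i"] Si \<open>i < length S\<close> i by simp
  ultimately show "\<exists>\<sigma> g. point_symmetry P \<sigma> g \<and> \<sigma> ! 0 = i"
    by blast
qed

lemma norm_vertex:
  assumes "vertex_transitive P" "i < length P"
  shows "norm (P ! i) = norm (P ! 0)"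
proof -
  obtain \<sigma> g where "point_symmetry P \<sigma> g" "\<sigma> ! 0 = i"
    using assms unfolding vertex_transitive_def by blast
  moreover have "0 < length P"
    using assms(2) by linarith
  ultimately show ?thesis
    by (auto simp: point_symmetry_def orthogonal_transformation_norm)
qed

definition nested_perm :: "nat list \<Rightarrow> nat list" where
  "nested_perm \<sigma> = \<sigma> @ map (\<lambda>j. j + length \<sigma>) \<sigma>"

definition nested_masses :: "nat \<Rightarrow> real \<Rightarrow> real list" where
  "nested_masses n \<mu> = replicate n 1 @ replicate n \<mu>"

lemma length_nested [simp]: "length (nested P t) = 2 * length P"
  by (simp add: nested_def)

lemma nested_perm_nth:
  assumes "point_symmetry P \<sigma> g" "j < 2 * length P"
  shows "nested_perm \<sigma> ! j = (if j < length P then \<sigma> ! j else \<sigma> ! (j - length P) + length P)"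
  using assms by (auto simp: nested_perm_def nth_append point_symmetry_def)

lemma nested_perm_less_iff:
  assumes "point_symmetry P \<sigma> g" "j < 2 * length P"
  shows "nested_perm \<sigma> ! j < length P \<longleftrightarrow> j < length P"
  using assms point_symmetry_nth_less[OF assms(1), of "j - length P"]
  by (auto simp: nested_perm_nth point_symmetry_nth_less)

lemma point_symmetry_nested:
  assumes sym: "point_symmetry P \<sigma> g"
  shows "point_symmetry (nested P t) (nested_perm \<sigma>) g"
proof -
  let ?n = "length P"
  have g: "orthogonal_transformation g" and l: "length \<sigma> = ?n"
    and P: "\<And>j. j < ?n \<Longrightarrow> P ! (\<sigma> ! j) = g (P ! j)"
    using sym by (auto simp: point_symmetry_def)
  have "distinct (nested_perm \<sigma>)"
    using sym by (auto simp: point_symmetry_def nested_perm_def distinct_map inj_on_def)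
  moreover have "set (nested_perm \<sigma>) \<subseteq> {..<2 * ?n}"
    using sym by (auto simp: point_symmetry_def nested_perm_def)
  moreover have "nested P t ! (nested_perm \<sigma> ! j) = g (nested P t ! j)" if j: "j < 2 * ?n" for j
  proof (cases "j < ?n")
    case True
    then show ?thesis
      using P point_symmetry_nth_less[OF sym] nested_perm_nth[OF sym j]
      by (simp add: nested_def nth_append)
  next
    case False
    then show ?thesis
      using P[of "j - ?n"] point_symmetry_nth_less[OF sym, of "j - ?n"] nested_perm_nth[OF sym j] j
      by (simp add: nested_def nth_append orthogonal_transformation_scaleR[OF g])
  qed
  ultimately show ?thesis
    using g l by (simp add: point_symmetry_def nested_perm_def)
qed

lemma nested_masses_nested_perm:
  assumes "point_symmetry P \<sigma> g" "j < 2 * length P"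
  shows "nested_masses (length P) \<mu> ! (nested_perm \<sigma> ! j) = nested_masses (length P) \<mu> ! j"
proof -
  have "nested_perm \<sigma> ! j < 2 * length P"
    using point_symmetry_nth_less[OF point_symmetry_nested[OF assms(1)]] assms(2) by simp
  then show ?thesis
    using nested_perm_less_iff[OF assms] assms(2) by (simp add: nested_masses_def nth_append)
qed

lemma nested_orbit:
  assumes trans: "vertex_transitive P" and i: "i < 2 * length P"
  obtains \<sigma> g where "point_symmetry P \<sigma> g" "nested_perm \<sigma> ! (if i < length P then 0 else length P) = i"
proof -
  let ?n = "length P"
  define k where "k = (if i < ?n then i else i - ?n)"
  have "k < ?n"
    using i by (simp add: k_def; linarith)
  then obtain \<sigma> g where sym: "point_symmetry P \<sigma> g" and "\<sigma> ! 0 = k"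
    using trans unfolding vertex_transitive_def by blast
  moreover have "P \<noteq> []"
    using \<open>k < ?n\<close> by auto
  ultimately have "nested_perm \<sigma> ! (if i < ?n then 0 else ?n) = i"
    using nested_perm_nth[OF sym, of "if i < ?n then 0 else ?n"] \<open>k < ?n\<close> i
    by (auto simp: k_def split: if_splits)
  with sym show thesis
    by (rule that)
qed

lemma cc_residual_nested_eq_0:
  assumes trans: "vertex_transitive P"
    and outer: "cc_residual (nested P t) (nested_masses (length P) \<mu>) c 0 = 0"
    and inner: "cc_residual (nested P t) (nested_masses (length P) \<mu>) c (length P) = 0"
    and i: "i < 2 * length P"
  shows "cc_residual (nested P t) (nested_masses (length P) \<mu>) c i = 0"
proof -
  let ?n = "length P"
  define i0 where "i0 = (if i < ?n then 0 else ?n)"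
  obtain \<sigma> g where sym: "point_symmetry P \<sigma> g" and "nested_perm \<sigma> ! i0 = i"
    using nested_orbit[OF trans i] unfolding i0_def by blast
  moreover have "i0 < 2 * ?n" "cc_residual (nested P t) (nested_masses ?n \<mu>) c i0 = 0"
    using outer inner i by (auto simp: i0_def)
  ultimately show ?thesis
    using cc_residual_symmetry[OF point_symmetry_nested[OF sym], where m = "nested_masses ?n \<mu>" and i = i0]
      nested_masses_nested_perm[OF sym] orthogonal_transformation_linear[of g] linear_0[of g] sym
    by (simp add: point_symmetry_def)
qed

lemma distinct_nested:
  assumes "vertex_transitive P" "distinct P" "P ! 0 \<noteq> 0" "0 < t" "t < 1"
  shows "distinct (nested P t)"
proof -
  have "x \<noteq> t *\<^sub>R y" if "x \<in> set P" "y \<in> set P" for x y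
  proof -
    have "norm x = norm (P ! 0)" "norm y = norm (P ! 0)"
      using that norm_vertex[OF assms(1)] by (metis in_set_conv_nth)+
    then have "norm (t *\<^sub>R y) < norm x"
      using assms(3-5) by simp
    then show ?thesis
      by auto
  qed
  moreover have "inj_on (\<lambda>x. t *\<^sub>R x) (set P)"
    using assms(4) by (simp add: inj_on_def)
  ultimately show ?thesis
    using assms(2) by (auto simp: nested_def distinct_map)
qed

lemma central_configuration_nestedI:
  assumes "vertex_transitive P" "distinct P" "P ! 0 \<noteq> 0" "0 < t" "t < 1"
    and "cc_residual (nested P t) (nested_masses (length P) \<mu>) c 0 = 0"
    and "cc_residual (nested P t) (nested_masses (length P) \<mu>) c (length P) = 0"
  shows "central_configuration (nested P t) (nested_masses (length P) \<mu>)"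
  unfolding central_configuration_iff_residual
  using distinct_nested[OF assms(1-5)] cc_residual_nested_eq_0[OF assms(1,6,7)]
  by (auto simp: nested_masses_def)

section \<open>The virial obstruction\<close>

text \<open>Coefficient of \<open>m\<^sub>j\<close> in \<open>\<Sum>\<^sub>i w\<^sub>i \<langle>cc_residual q m c i, q\<^sub>i\<rangle>\<close> for \<open>q = nested P t\<close>, with weight
  \<open>w\<^sub>i = t\<^sup>2\<close> on the outer and \<open>w\<^sub>i = -1\<close> on the inner copy.\<close>

definition virial_coeff :: "(real^3) list \<Rightarrow> real \<Rightarrow> real \<Rightarrow> nat \<Rightarrow> real" where
  "virial_coeff P t c j = (\<Sum>i<2 * length P. (if i < length P then t^2 else -1) *
     ((1 / norm (nested P t ! j - nested P t ! i) ^ 3 - c) *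
      ((nested P t ! j - nested P t ! i) \<bullet> nested P t ! i)))"

lemma virial_identity:
  "(\<Sum>i<2 * length P. (if i < length P then t^2 else -1) * (cc_residual (nested P t) m c i \<bullet> nested P t ! i))
   = (\<Sum>j<2 * length P. m ! j * virial_coeff P t c j)"
proof -
  let ?q = "nested P t"
  have "(\<Sum>i<2 * length P. (if i < length P then t^2 else -1) * (cc_residual ?q m c i \<bullet> ?q ! i))
     = (\<Sum>i<2 * length P. \<Sum>j<2 * length P. m ! j * ((if i < length P then t^2 else -1) *
          ((1 / norm (?q ! j - ?q ! i) ^ 3 - c) * ((?q ! j - ?q ! i) \<bullet> ?q ! i))))"
    by (simp add: cc_residual_def inner_sum_left sum_distrib_left algebra_simps)
  also have "\<dots> = (\<Sum>j<2 * length P. m ! j * virial_coeff P t c j)"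
    by (subst sum.swap) (simp add: virial_coeff_def sum_distrib_left)
  finally show ?thesis .
qed

lemma virial_coeff_symmetry:
  assumes sym: "point_symmetry P \<sigma> g" and j: "j < 2 * length P"
  shows "virial_coeff P t c (nested_perm \<sigma> ! j) = virial_coeff P t c j"
proof -
  let ?q = "nested P t" and ?\<tau> = "nested_perm \<sigma>"
  have sym': "point_symmetry ?q ?\<tau> g"
    by (rule point_symmetry_nested[OF sym])
  have g: "orthogonal_transformation g" and q: "\<And>i. i < 2 * length P \<Longrightarrow> ?q ! (?\<tau> ! i) = g (?q ! i)"
    using sym' by (auto simp: point_symmetry_def)
  let ?F = "\<lambda>i. (if i < length P then t^2 else -1) *
     ((1 / norm (?q ! (?\<tau> ! j) - ?q ! i) ^ 3 - c) * ((?q ! (?\<tau> ! j) - ?q ! i) \<bullet> ?q ! i))"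
  have "virial_coeff P t c (?\<tau> ! j) = (\<Sum>i<2 * length P. ?F (?\<tau> ! i))"
    unfolding virial_coeff_def using sum.reindex_bij_betw[OF point_symmetry_bij[OF sym'], of ?F] by simp
  also have "\<dots> = virial_coeff P t c j"
    unfolding virial_coeff_def
  proof (rule sum.cong[OF refl])
    fix i assume "i \<in> {..<2 * length P}"
    then have "?q ! (?\<tau> ! j) - ?q ! (?\<tau> ! i) = g (?q ! j - ?q ! i)"
      using q j orthogonal_transformation_linear[OF g] by (simp add: linear_diff)
    then show "?F (?\<tau> ! i) = (if i < length P then t^2 else -1) *
        ((1 / norm (?q ! j - ?q ! i) ^ 3 - c) * ((?q ! j - ?q ! i) \<bullet> ?q ! i))"
      using nested_perm_less_iff[OF sym] q \<open>i \<in> {..<2 * length P}\<close> g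
      by (simp add: orthogonal_transformation_norm orthogonal_transformation_def)
  qed
  finally show ?thesis .
qed

lemma virial_coeff_nested_orbit:
  assumes "vertex_transitive P" "j < 2 * length P"
  shows "virial_coeff P t c j = virial_coeff P t c (if j < length P then 0 else length P)"
proof -
  obtain \<sigma> g where sym: "point_symmetry P \<sigma> g"
    and "nested_perm \<sigma> ! (if j < length P then 0 else length P) = j"
    using nested_orbit[OF assms] by blast
  moreover have "P \<noteq> []"
    using assms(2) by auto
  ultimately show ?thesis
    using virial_coeff_symmetry[OF sym, of "if j < length P then 0 else length P" t c] assms(2)
    by (simp split: if_splits)
qed

lemma virial_obstruction:
  assumes trans: "vertex_transitive P" and "P \<noteq> []"
    and cc: "central_configuration (nested P t) m" and pos: "\<forall>x\<in>set m. 0 < x"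
  shows "\<exists>c M M'. 0 < M \<and> 0 < M' \<and> M * virial_coeff P t c 0 + M' * virial_coeff P t c (length P) = 0"
proof -
  let ?n = "length P"
  obtain c where c: "\<And>i. i < 2 * ?n \<Longrightarrow> cc_residual (nested P t) m c i = 0"
    and lm: "length m = 2 * ?n"
    using cc unfolding central_configuration_iff_residual by auto
  have "0 = (\<Sum>j<2 * ?n. m ! j * virial_coeff P t c j)"
    using c virial_identity[where P = P and t = t and m = m and c = c] by simp
  also have "\<dots> = (\<Sum>j<2 * ?n. if j < ?n then m ! j * virial_coeff P t c 0 else m ! j * virial_coeff P t c ?n)"
    by (rule sum.cong) (simp_all add: virial_coeff_nested_orbit[OF trans])
  also have "\<dots> = (\<Sum>j<?n. m ! j) * virial_coeff P t c 0 + (\<Sum>j\<in>{?n..<2 * ?n}. m ! j) * virial_coeff P t c ?n"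
  proof -
    have "{..<2 * ?n} \<inter> {j. j < ?n} = {..<?n}" "{..<2 * ?n} \<inter> - {j. j < ?n} = {?n..<2 * ?n}"
      by auto
    then show ?thesis
      by (simp add: sum.If_cases sum_distrib_right)
  qed
  finally have "(\<Sum>j<?n. m ! j) * virial_coeff P t c 0 + (\<Sum>j\<in>{?n..<2 * ?n}. m ! j) * virial_coeff P t c ?n = 0"
    by simp
  moreover have "0 < m ! j" if "j < 2 * ?n" for j
    using pos lm that by simp
  then have "0 < (\<Sum>j<?n. m ! j)" "0 < (\<Sum>j\<in>{?n..<2 * ?n}. m ! j)"
    using \<open>P \<noteq> []\<close> by (auto intro!: sum_pos)
  ultimately show ?thesis
    by blast
qed

section \<open>The threshold\<close>

lemma crossing_point:
  fixes f :: "real \<Rightarrow> real"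
  assumes mono: "\<And>s t. 0 < s \<Longrightarrow> s < t \<Longrightarrow> t < 1 \<Longrightarrow> f s < f t"
    and ab: "0 < a" "a < b" "b < 1" and "f a < y" "y < f b"
    and cont: "continuous_on {a..b} f"
  obtains d where "0 < d" "d < 1" "\<And>t. 0 < t \<Longrightarrow> t < d \<Longrightarrow> f t < y"
    "\<And>t. d < t \<Longrightarrow> t < 1 \<Longrightarrow> y < f t"
proof -
  obtain d where d: "a \<le> d" "d \<le> b" "f d = y"
    using IVT'[of f a y b] assms by force
  show thesis
  proof (rule that[of d])
    show "0 < d" "d < 1"
      using ab d by auto
    show "f t < y" if "0 < t" "t < d" for t
      using mono[of t d] that d ab by simp
    show "y < f t" if "d < t" "t < 1" for t
      using mono[of d t] that d ab by simp
  qed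
qed

lemma balancing_mass:
  fixes K A B C t :: real
  assumes "0 < K" "0 < t" "C < t^2 * A" "t^3 * B < A"
  obtains \<mu> c where "0 < \<mu>" "K * c * (1 + \<mu>) = A + \<mu> * B" "K * c * t^2 * (1 + \<mu>) = C + \<mu> * A / t"
proof -
  define \<mu> where "\<mu> = t * (t^2 * A - C) / (A - t^3 * B)"
  define c where "c = (A + \<mu> * B) / (K * (1 + \<mu>))"
  have "0 < \<mu>"
    using assms by (simp add: \<mu>_def)
  then have c: "K * c * (1 + \<mu>) = A + \<mu> * B"
    using assms(1) by (simp add: c_def)
  have "\<mu> * (A - t^3 * B) = t * (t^2 * A - C)"
    using assms(4) by (simp add: \<mu>_def)
  then have "t * (t^2 * (A + \<mu> * B)) = t * (C + \<mu> * A / t)"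
    using assms(2) by (simp add: field_simps power2_eq_square power3_eq_cube)
  then have "t^2 * (A + \<mu> * B) = C + \<mu> * A / t"
    using assms(2) by simp
  moreover have "K * c * t^2 * (1 + \<mu>) = t^2 * (K * c * (1 + \<mu>))"
    by (simp add: ac_simps)
  ultimately have "K * c * t^2 * (1 + \<mu>) = C + \<mu> * A / t"
    using c by simp
  with \<open>0 < \<mu>\<close> c show thesis
    by (rule that)
qed

definition nested_cc :: "(real^3) list \<Rightarrow> real \<Rightarrow> bool" where
  "nested_cc P t \<longleftrightarrow>
     (\<exists>m. length m = 2 * length P \<and> (\<forall>x\<in>set m. 0 < x) \<and> central_configuration (nested P t) m)"

definition cc_threshold :: "(real^3) list \<Rightarrow> real \<Rightarrow> bool" where
  "cc_threshold P \<delta> \<longleftrightarrow> 0 < \<delta> \<and> \<delta> < 1 \<and>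
     (\<forall>t. 0 < t \<and> t < \<delta> \<longrightarrow> nested_cc P t) \<and> (\<forall>t. \<delta> < t \<and> t < 1 \<longrightarrow> \<not> nested_cc P t)"

lemma cc_thresholdI:
  fixes K A :: real and B C :: "real \<Rightarrow> real"
  assumes trans: "vertex_transitive P" and P: "distinct P" "P \<noteq> []" "P ! 0 \<noteq> 0"
    and outer: "\<And>t \<mu> c. 0 < t \<Longrightarrow> K * c * (1 + \<mu>) = A + \<mu> * B t \<Longrightarrow>
       cc_residual (nested P t) (nested_masses (length P) \<mu>) c 0 = 0"
    and inner: "\<And>t \<mu> c. 0 < t \<Longrightarrow> K * c * t^2 * (1 + \<mu>) = C t + \<mu> * A / t \<Longrightarrow>
       cc_residual (nested P t) (nested_masses (length P) \<mu>) c (length P) = 0"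
    and virial_outer: "\<And>t c. 0 < t \<Longrightarrow> virial_coeff P t c 0 = C t - t^2 * A"
    and virial_inner: "\<And>t c. 0 < t \<Longrightarrow> virial_coeff P t c (length P) = A / t - t^2 * B t"
    and "0 < K" and C_less: "\<And>t. 0 < t \<Longrightarrow> t < 1 \<Longrightarrow> C t < t^2 * A"
    and \<delta>: "0 < \<delta>" "\<delta> < 1"
    and below: "\<And>t. 0 < t \<Longrightarrow> t < \<delta> \<Longrightarrow> t^3 * B t < A"
    and above: "\<And>t. \<delta> < t \<Longrightarrow> t < 1 \<Longrightarrow> A < t^3 * B t"
  shows "cc_threshold P \<delta>"
  unfolding cc_threshold_def
proof (intro conjI allI impI)
  fix t assume t: "0 < t \<and> t < \<delta>"
  then obtain \<mu> c where "0 < \<mu>" and eqs: "K * c * (1 + \<mu>) = A + \<mu> * B t"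
      "K * c * t^2 * (1 + \<mu>) = C t + \<mu> * A / t"
    using balancing_mass[OF \<open>0 < K\<close> _ C_less below] \<delta> by (metis less_trans)
  have "0 < t" "t < 1"
    using t \<delta> by auto
  then have "central_configuration (nested P t) (nested_masses (length P) \<mu>)"
    using central_configuration_nestedI[OF trans P(1,3)] outer[OF _ eqs(1)] inner[OF _ eqs(2)] by blast
  with \<open>0 < \<mu>\<close> show "nested_cc P t"
    unfolding nested_cc_def by (intro exI[of _ "nested_masses (length P) \<mu>"]) (auto simp: nested_masses_def)
next
  fix t assume t: "\<delta> < t \<and> t < 1"
  show "\<not> nested_cc P t"
  proof
    assume "nested_cc P t"
    then obtain m where "central_configuration (nested P t) m" "\<forall>x\<in>set m. 0 < x"
      unfolding nested_cc_def by blast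
    then obtain c M M' where M: "0 < M" "0 < M'"
      and balance: "M * virial_coeff P t c 0 + M' * virial_coeff P t c (length P) = 0"
      using virial_obstruction[OF trans \<open>P \<noteq> []\<close>] by blast
    have "0 < t"
      using t \<delta> by simp
    have "C t - t^2 * A < 0"
      using C_less t \<delta> by simp
    moreover have "A / t - t^2 * B t = (A - t^3 * B t) / t"
      using \<open>0 < t\<close> by (simp add: field_simps power2_eq_square power3_eq_cube)
    then have "A / t - t^2 * B t < 0"
      using above t \<open>0 < t\<close> by (simp add: divide_neg_pos)
    ultimately have "M * (C t - t^2 * A) + M' * (A / t - t^2 * B t) < 0"
      using M by (simp add: add_neg_neg mult_pos_neg)
    then show False
      using balance virial_outer[OF \<open>0 < t\<close>] virial_inner[OF \<open>0 < t\<close>] by simp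
  qed
qed (use \<delta> in auto)

section \<open>Estimates for \<open>s\<^sup>-\<^sup>3\<^sup>/\<^sup>2\<close>\<close>

lemma inv_sqrt_cube_eq: "0 < s \<Longrightarrow> inv_sqrt_cube s = 1 / (s * sqrt s)"
  unfolding inv_sqrt_cube_def by (simp add: power3_eq_cube)

lemma inv_sqrt_cube_pos: "0 < s \<Longrightarrow> 0 < inv_sqrt_cube s"
  by (simp add: inv_sqrt_cube_eq)

lemma inv_sqrt_cube_le_1:
  assumes "1 \<le> s"
  shows "inv_sqrt_cube s \<le> 1"
proof -
  have "1 * 1 \<le> s * sqrt s"
    using assms by (intro mult_mono) auto
  then show ?thesis
    using assms by (simp add: inv_sqrt_cube_eq)
qed

lemma inv_sqrt_cube_one_minus:
  assumes "t < 1"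
  shows "inv_sqrt_cube (t * t - 2 * t + 1) = 1 / (1 - t) ^ 3"
proof -
  have "t * t - 2 * t + 1 = (1 - t)^2"
    by (simp add: power2_eq_square algebra_simps)
  then show ?thesis
    using assms by (simp add: inv_sqrt_cube_def)
qed

lemma inv_sqrt_cube_one_plus:
  assumes "0 < t"
  shows "inv_sqrt_cube (t * t + 2 * t + 1) = 1 / (1 + t) ^ 3"
proof -
  have "t * t + 2 * t + 1 = (1 + t)^2"
    by (simp add: power2_eq_square algebra_simps)
  then show ?thesis
    using assms by (simp add: inv_sqrt_cube_def)
qed

lemma inv_sqrt_cube_three_mult_square:
  assumes "0 \<le> a"
  shows "inv_sqrt_cube (3 * a^2) = 1 / (3 * sqrt 3 * a ^ 3)"
  using assms by (simp add: inv_sqrt_cube_def real_sqrt_mult power_mult_distrib power3_eq_cube)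

lemma inv_sqrt_cube_3_one_minus:
  "t < 1 \<Longrightarrow> inv_sqrt_cube (t * t * 3 - 6 * t + 3) = 1 / (3 * sqrt 3 * (1 - t) ^ 3)"
  using inv_sqrt_cube_three_mult_square[of "1 - t"] by (simp add: power2_eq_square algebra_simps)

lemma inv_sqrt_cube_3_one_plus:
  "0 < t \<Longrightarrow> inv_sqrt_cube (t * t * 3 + 6 * t + 3) = 1 / (3 * sqrt 3 * (1 + t) ^ 3)"
  using inv_sqrt_cube_three_mult_square[of "1 + t"] by (simp add: power2_eq_square algebra_simps)

text \<open>Rational bounds on \<open>s\<^sup>-\<^sup>3\<^sup>/\<^sup>2\<close>, sharp at \<open>s = a\<^sup>2\<close>, derived from \<open>2 a sqrt s \<le> s + a\<^sup>2\<close>.\<close>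

lemma two_mult_sqrt_le:
  fixes a s :: real
  assumes "0 \<le> s"
  shows "2 * a * sqrt s \<le> s + a^2"
proof -
  have "0 \<le> (sqrt s - a)^2"
    by simp
  then show ?thesis
    using assms by (simp add: power2_eq_square algebra_simps)
qed

lemma inv_sqrt_cube_upper:
  fixes a s :: real
  assumes s: "0 < s" and a: "0 < a"
  shows "inv_sqrt_cube s \<le> (s + a^2) / (2 * a * s^2)"
proof -
  have "(2 * a * sqrt s) * sqrt s \<le> (s + a^2) * sqrt s"
    using two_mult_sqrt_le[of s a] s by (intro mult_right_mono) auto
  then have "2 * a * s \<le> (s + a^2) * sqrt s"
    using s by (simp add: mult.assoc)
  then have "s * (2 * a * s) \<le> s * ((s + a^2) * sqrt s)"
    using s by (intro mult_left_mono) auto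
  then have "2 * a * s^2 \<le> (s + a^2) * (s * sqrt s)"
    by (simp add: power2_eq_square algebra_simps)
  moreover have "0 < s * sqrt s" "0 < 2 * a * s^2"
    using s a by simp_all
  ultimately show ?thesis
    using s by (simp add: inv_sqrt_cube_eq divide_simps)
qed

lemma inv_sqrt_cube_lower:
  fixes a s :: real
  assumes s: "0 < s" and a: "0 < a"
  shows "2 * a / (s * (s + a^2)) \<le> inv_sqrt_cube s"
proof -
  have "s * (2 * a * sqrt s) \<le> s * (s + a^2)"
    using two_mult_sqrt_le[of s a] s by (intro mult_left_mono) auto
  then have "2 * a * (s * sqrt s) \<le> s * (s + a^2)"
    by (simp add: algebra_simps)
  moreover have "0 < s * sqrt s" "0 < s * (s + a^2)"
    using s by (simp_all add: add_pos_nonneg)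
  ultimately show ?thesis
    using two_mult_sqrt_le[of s a] s a
    by (simp add: inv_sqrt_cube_eq divide_simps add_pos_pos not_less[symmetric])
qed

lemma continuous_on_inv_sqrt_cube [continuous_intros]:
  assumes "continuous_on S f" "\<And>x. x \<in> S \<Longrightarrow> 0 < f x"
  shows "continuous_on S (\<lambda>x. inv_sqrt_cube (f x))"
  unfolding inv_sqrt_cube_def using assms
  by (intro continuous_intros) (auto simp: less_imp_neq[symmetric])

lemma sqrt_3_bounds: "1 < sqrt 3" "sqrt 3 < 2" "5 / 3 \<le> sqrt 3"
proof -
  show "1 < sqrt 3" "sqrt 3 < 2"
    by (simp_all add: real_less_rsqrt real_less_lsqrt)
  show "5 / 3 \<le> sqrt 3"
    by (rule real_le_rsqrt) (simp add: power2_eq_square)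
qed

lemma cube_div_sq_one_minus_less:
  fixes s t :: real
  assumes "0 < s" "s < t" "t < 1"
  shows "s^3 / (1 - s)^2 < t^3 / (1 - t)^2"
proof (rule frac_less)
  show "s^3 < t^3"
    using assms by (simp add: power_strict_mono)
  show "(1 - t)^2 \<le> (1 - s)^2"
    using assms by (intro power_mono) auto
qed (use assms in auto)

lemma cube_div_sq_one_plus_less:
  fixes s t :: real
  assumes s: "0 < s" and st: "s < t"
  shows "s^3 / (1 + s)^2 < t^3 / (1 + t)^2"
proof -
  have e: "x^3 / (1 + x)^2 = x * (x / (1 + x))^2" if "0 < x" for x :: real
    using that by (simp add: power2_eq_square power3_eq_cube field_simps)
  have "s / (1 + s) < t / (1 + t)"
    using s st by (simp add: divide_simps algebra_simps)
  then have "(s / (1 + s))^2 < (t / (1 + t))^2"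
    using s by (simp add: power_strict_mono)
  then have "s * (s / (1 + s))^2 < t * (t / (1 + t))^2"
    using s st by (intro mult_strict_mono) auto
  then show ?thesis
    using e[OF s] e[of t] s st by simp
qed

lemma quadratic_pos:
  fixes x r k :: real
  assumes "0 \<le> x" "x < 1" "0 < r" "k \<le> r"
  shows "0 < r * x * x - 2 * k * x + r"
proof -
  have "r * x * x - 2 * r * x + r = r * (1 - x)^2"
    by (simp add: power2_eq_square algebra_simps)
  moreover have "0 < r * (1 - x)^2" "2 * k * x \<le> 2 * r * x"
    using assms by (auto intro: mult_right_mono)
  ultimately show ?thesis
    by linarith
qed

lemma square_div_quadratic_less:
  fixes s t r k :: real
  assumes s: "0 < s" and st: "s < t" and t1: "t < 1" and r: "0 < r" and k: "k \<le> r"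
  shows "s^2 / (r * s * s - 2 * k * s + r) < t^2 / (r * t * t - 2 * k * t + r)"
proof -
  have "s * t < s" "s * t < t"
    using s st t1 by auto
  then have "r * (2 * (s * t)) < r * (t + s)"
    using r by simp
  moreover have "(2 * (s * t)) * k \<le> (2 * (s * t)) * r"
    using k s st by (intro mult_left_mono) auto
  ultimately have "2 * k * s * t < r * (t + s)"
    by (simp add: algebra_simps)
  then have "0 < (t - s) * (r * (t + s) - 2 * k * s * t)"
    using st by simp
  moreover have "t^2 * (r * s * s - 2 * k * s + r) - s^2 * (r * t * t - 2 * k * t + r)
      = (t - s) * (r * (t + s) - 2 * k * s * t)"
    by (simp add: power2_eq_square algebra_simps)
  ultimately show ?thesis
    using quadratic_pos[of s r k] quadratic_pos[of t r k] assms by (simp add: divide_simps)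
qed

lemma cube_mult_inv_sqrt_cube_less:
  fixes s t r k :: real
  assumes s: "0 < s" and st: "s < t" and t1: "t < 1" and r: "0 < r" and k: "k \<le> r"
  shows "s^3 * inv_sqrt_cube (r * s * s - 2 * k * s + r) < t^3 * inv_sqrt_cube (r * t * t - 2 * k * t + r)"
proof -
  have eq: "x^3 * inv_sqrt_cube w = (x^2 / w) * sqrt (x^2 / w)" if "0 < x" "0 < w" for x w :: real
    using that by (simp add: inv_sqrt_cube_eq real_sqrt_divide field_simps power2_eq_square power3_eq_cube)
  define a where "a = s^2 / (r * s * s - 2 * k * s + r)"
  define b where "b = t^2 / (r * t * t - 2 * k * t + r)"
  have "a < b"
    unfolding a_def b_def by (rule square_div_quadratic_less[OF assms])
  moreover have "0 < a"
    using quadratic_pos[of s r k] assms by (simp add: a_def)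
  ultimately have "a * sqrt a < b * sqrt b"
    by (simp add: mult_strict_mono)
  then show ?thesis
    using eq[of s] eq[of t] quadratic_pos[of s r k] quadratic_pos[of t r k] assms
    by (simp add: a_def b_def)
qed

lemma cube_div_sqrt_3_sq_one_minus_less:
  fixes s t :: real
  assumes "0 < s" "s < t" "t < 1"
  shows "s^3 / (sqrt 3 * (1 - s)^2) < t^3 / (sqrt 3 * (1 - t)^2)"
  using divide_strict_right_mono[OF cube_div_sq_one_minus_less[OF assms], of "sqrt 3"]
  by (simp add: divide_divide_eq_left mult.commute)

section \<open>The tetrahedron\<close>

text \<open>With \<open>\<rho>\<^sup>2 = |q\<^sub>1|\<^sup>2\<close> and \<open>k\<^sub>j = \<langle>q\<^sub>1, q\<^sub>j\<rangle>\<close>, so that \<open>|q\<^sub>1 - t q\<^sub>j|\<^sup>2 = \<rho>\<^sup>2 t\<^sup>2 - 2 k\<^sub>j t + \<rho>\<^sup>2\<close>,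
  the three polyhedra have \<open>A = \<Sum>\<^sub>j\<^sub>\<noteq>\<^sub>1 (\<rho>\<^sup>2 - k\<^sub>j) / |q\<^sub>1 - q\<^sub>j|\<^sup>3\<close>,
  \<open>B(t) = \<Sum>\<^sub>j (\<rho>\<^sup>2 - t k\<^sub>j) / |q\<^sub>1 - t q\<^sub>j|\<^sup>3\<close> and \<open>C(t) = \<Sum>\<^sub>j (t\<^sup>2 \<rho>\<^sup>2 - t k\<^sub>j) / |t q\<^sub>1 - q\<^sub>j|\<^sup>3\<close>,
  and \<open>K = n \<rho>\<^sup>2\<close>.\<close>

definition tetrahedron_A :: real where
  "tetrahedron_A = 12 * inv_sqrt_cube 8"

definition tetrahedron_B :: "real \<Rightarrow> real" where
  "tetrahedron_B t = 3 * (1 - t) * inv_sqrt_cube (t * t * 3 - 6 * t + 3)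
     + 3 * (3 + t) * inv_sqrt_cube (t * t * 3 + 2 * t + 3)"

definition tetrahedron_C :: "real \<Rightarrow> real" where
  "tetrahedron_C t = t * (3 * t - 3) * inv_sqrt_cube (t * t * 3 - 6 * t + 3)
     + 3 * t * (3 * t + 1) * inv_sqrt_cube (t * t * 3 + 2 * t + 3)"

lemma length_tetrahedron [simp]: "length tetrahedron = 4"
  by (simp add: tetrahedron_def)

lemma nested_masses_tetrahedron: "nested_masses 4 \<mu> = [1, 1, 1, 1, \<mu>, \<mu>, \<mu>, \<mu>]"
  by (simp add: nested_masses_def numeral_eq_Suc)

lemma tetrahedron_residual_outer:
  "3 *\<^sub>R cc_residual (nested tetrahedron t) (nested_masses 4 \<mu>) c 0
   = (12 * c * (1 + \<mu>) - tetrahedron_A - \<mu> * tetrahedron_B t) *\<^sub>R pt 1 1 1"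
  unfolding vec_eq_iff forall_3
  apply (intro conjI)
  apply (simp_all add: cc_residual_def nested_def tetrahedron_def nested_masses_tetrahedron
      tetrahedron_A_def tetrahedron_B_def lessThan_nat_numeral sum_component)
  apply algebra+
  done

lemma tetrahedron_residual_inner:
  assumes "0 < t"
  shows "(3 * t) *\<^sub>R cc_residual (nested tetrahedron t) (nested_masses 4 \<mu>) c 4
   = (12 * c * t^2 * (1 + \<mu>) - tetrahedron_C t - \<mu> * tetrahedron_A / t) *\<^sub>R pt 1 1 1"
  unfolding vec_eq_iff forall_3
  apply (intro conjI)
  apply (simp_all add: cc_residual_def nested_def tetrahedron_def nested_masses_tetrahedron
      tetrahedron_A_def tetrahedron_C_def lessThan_nat_numeral sum_component assms inv_sqrt_cube_mult_square)
  apply (simp_all add: field_simps power3_eq_cube assms less_imp_neq[OF assms, symmetric])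
  apply algebra+
  done

lemma tetrahedron_virial_outer:
  assumes "0 < t"
  shows "virial_coeff tetrahedron t c 0 = tetrahedron_C t - t^2 * tetrahedron_A"
  using assms
  apply (simp add: virial_coeff_def nested_def tetrahedron_def tetrahedron_A_def tetrahedron_C_def lessThan_nat_numeral
      inner_vec3 inv_sqrt_cube_mult_square)
  apply (simp add: field_simps power3_eq_cube power2_eq_square)
  done

lemma tetrahedron_virial_inner:
  assumes "0 < t"
  shows "virial_coeff tetrahedron t c 4 = tetrahedron_A / t - t^2 * tetrahedron_B t"
  using assms
  apply (simp add: virial_coeff_def nested_def tetrahedron_def tetrahedron_A_def tetrahedron_B_def lessThan_nat_numeral
      inner_vec3 inv_sqrt_cube_mult_square)
  apply (simp add: field_simps power3_eq_cube power2_eq_square)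
  done

lemma tetrahedron_vertex_transitive: "vertex_transitive tetrahedron"
  by (rule vertex_transitiveI[where S = "[([0,1,2,3], \<lambda>x. x),
      ([1, 0, 3, 2], signed_perm (-1) (-1) 1 1 2 3),
      ([2, 3, 0, 1], signed_perm (-1) 1 (-1) 1 2 3),
      ([3, 2, 1, 0], signed_perm 1 (-1) (-1) 1 2 3)]"])
    (simp_all add: point_symmetry_def tetrahedron_def numeral_eq_Suc All_less_Suc upt_rec)

lemma tetrahedron_A_bounds: "9 / (10 * sqrt 3) \<le> tetrahedron_A" "tetrahedron_A \<le> 3 / 2"
proof -
  have "sqrt 72 = 3 * sqrt 8" "sqrt 75 = 5 * sqrt 3"
    using real_sqrt_mult[of 9 8] real_sqrt_mult[of 25 3] by simp_all
  moreover have "sqrt 72 \<le> sqrt 75"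
    by simp
  ultimately have "3 * sqrt 8 \<le> 5 * sqrt 3"
    by simp
  moreover have A: "tetrahedron_A = 12 / (8 * sqrt 8)"
    by (simp add: tetrahedron_A_def inv_sqrt_cube_eq)
  ultimately show "9 / (10 * sqrt 3) \<le> tetrahedron_A"
    unfolding A by (simp add: divide_simps)
  have "1 \<le> sqrt 8"
    by simp
  then show "tetrahedron_A \<le> 3 / 2"
    unfolding A by (simp add: divide_simps)
qed

lemma tetrahedron_rational_bound:
  fixes t :: real
  assumes t: "0 < t" "t < 1"
  shows "3 * (3 * t + 1) * ((t * t * 3 + 2 * t + 3) + 3) / (2 * (t * t * 3 + 2 * t + 3)^2)
    < 9 * t / 10 + 1 / (1 - t)^2"
proof -
  define w where "w = t * t * 3 + 2 * t + 3"
  have "0 < w"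
    unfolding w_def using t by (simp add: add_pos_pos)
  \<comment> \<open>\<open>Q\<close> has positive coefficients in the Bernstein basis \<open>t\<^sup>k (1 - t)\<^sup>6\<^sup>-\<^sup>k\<close>, so \<open>Q > 0\<close> on \<open>(0, 1)\<close>.\<close>
  define Q where "Q = (81/5) * (1-t)^6 + (1027/5) * t * (1-t)^5 + (3938/5) * t^2 * (1-t)^4
    + (7147/5) * t^3 * (1-t)^3 + (6796/5) * t^4 * (1-t)^2 + 640 * t^5 * (1-t) + 128 * t^6"
  have "0 < Q"
    unfolding Q_def using t
    by (intro add_pos_nonneg mult_pos_pos mult_nonneg_nonneg zero_less_power zero_le_power) auto
  moreover have "(9 * t * (1-t)^2 + 10) * (2 * w^2) - 3 * (3 * t + 1) * (w + 3) * (10 * (1-t)^2) = 10 * t * Q"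
    unfolding Q_def w_def by algebra
  ultimately have "3 * (3 * t + 1) * (w + 3) * (10 * (1-t)^2) < (9 * t * (1-t)^2 + 10) * (2 * w^2)"
    using t by (smt (verit) mult_pos_pos)
  then show ?thesis
    unfolding w_def[symmetric] using \<open>0 < w\<close> t by (simp add: divide_simps) (simp add: mult.commute)
qed

lemma tetrahedron_C_less:
  assumes t: "0 < t" "t < 1"
  shows "tetrahedron_C t < t^2 * tetrahedron_A"
proof -
  define r where "r = sqrt 3"
  have r: "0 < r" "r^2 = 3"
    unfolding r_def by simp_all
  define w where "w = t * t * 3 + 2 * t + 3"
  have w: "0 < w"
    unfolding w_def using t by (simp add: add_pos_pos)
  define u where "u = 1 - t"
  have u: "0 < u"
    using t by (simp add: u_def)
  have "3 * t - 3 = - 3 * u"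
    by (simp add: u_def)
  then have "t * (3 * t - 3) * (1 / (3 * r * u^3)) = t * (- 3 * u) * (1 / (3 * r * u^3))"
    by simp
  also have "\<dots> = - (t / r) * (1 / u^2)"
    using u r by (simp add: field_simps power3_eq_cube power2_eq_square)
  finally have "t * (3 * t - 3) * (1 / (3 * r * u^3)) = - (t / r) * (1 / u^2)" .
  then have C: "tetrahedron_C t = - (t / r) * (1 / u^2) + 3 * t * (3 * t + 1) * inv_sqrt_cube w"
    unfolding tetrahedron_C_def inv_sqrt_cube_3_one_minus[OF t(2)] by (simp add: w_def r_def u_def)
  have "3 * t * (3 * t + 1) * inv_sqrt_cube w \<le> 3 * t * (3 * t + 1) * ((w + 3) / (2 * r * w^2))"
    using inv_sqrt_cube_upper[OF w r(1)] r(2) t by (intro mult_left_mono) auto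
  also have "\<dots> = (t / r) * (3 * (3 * t + 1) * (w + 3) / (2 * w^2))"
    using r w by (simp add: field_simps)
  finally have "tetrahedron_C t \<le> (t / r) * (3 * (3 * t + 1) * (w + 3) / (2 * w^2) - 1 / u^2)"
    using C by (simp add: right_diff_distrib)
  also have "\<dots> < (t / r) * (9 * t / 10)"
  proof (rule mult_strict_left_mono)
    show "3 * (3 * t + 1) * (w + 3) / (2 * w^2) - 1 / u^2 < 9 * t / 10"
      using tetrahedron_rational_bound[OF t] unfolding w_def[symmetric] u_def[symmetric] by linarith
    show "0 < t / r"
      using t r by simp
  qed
  also have "\<dots> = t^2 * (9 / (10 * r))"
    by (simp add: power2_eq_square)
  also have "\<dots> \<le> t^2 * tetrahedron_A"
    using tetrahedron_A_bounds(1) unfolding r_def by (intro mult_left_mono) auto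
  finally show ?thesis .
qed

lemma tetrahedron_B_eq:
  assumes "0 < t" "t < 1"
  shows "t^3 * tetrahedron_B t
    = t^3 / (sqrt 3 * (1 - t)^2) + 3 * (3 + t) * (t^3 * inv_sqrt_cube (t * t * 3 + 2 * t + 3))"
proof -
  define u where "u = 1 - t"
  have "u \<noteq> 0"
    using assms by (simp add: u_def)
  then have "t^3 * (3 * u * (1 / (3 * sqrt 3 * u^3))) = t^3 / (sqrt 3 * u^2)"
    by (simp add: field_simps power3_eq_cube power2_eq_square)
  moreover have "t^3 * tetrahedron_B t = t^3 * (3 * u * (1 / (3 * sqrt 3 * u^3)))
      + 3 * (3 + t) * (t^3 * inv_sqrt_cube (t * t * 3 + 2 * t + 3))"
    unfolding tetrahedron_B_def inv_sqrt_cube_3_one_minus[OF assms(2)] u_def[symmetric]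
    by (simp add: algebra_simps)
  ultimately show ?thesis
    by (simp add: u_def)
qed

lemma tetrahedron_B_mono:
  assumes s: "0 < s" and st: "s < t" and t: "t < 1"
  shows "s^3 * tetrahedron_B s < t^3 * tetrahedron_B t"
proof -
  have "s^3 * inv_sqrt_cube (s * s * 3 + 2 * s + 3) < t^3 * inv_sqrt_cube (t * t * 3 + 2 * t + 3)"
    using cube_mult_inv_sqrt_cube_less[OF assms, of 3 "-1"] by (simp add: algebra_simps)
  moreover have "0 \<le> s^3 * inv_sqrt_cube (s * s * 3 + 2 * s + 3)"
    using s inv_sqrt_cube_pos[of "s * s * 3 + 2 * s + 3"] by (simp add: add_pos_pos)
  ultimately have "3 * (3 + s) * (s^3 * inv_sqrt_cube (s * s * 3 + 2 * s + 3))
      < 3 * (3 + t) * (t^3 * inv_sqrt_cube (t * t * 3 + 2 * t + 3))"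
    using s st by (rule_tac mult_strict_mono) auto
  then show ?thesis
    using tetrahedron_B_eq[of s] tetrahedron_B_eq[of t] cube_div_sqrt_3_sq_one_minus_less[OF assms] assms
    by simp
qed

lemma tetrahedron_B_below: "(1/10)^3 * tetrahedron_B (1/10) < tetrahedron_A"
proof -
  have B: "(1/10::real)^3 * tetrahedron_B (1/10) = (1/10)^3 / (sqrt 3 * (1 - 1/10)^2)
      + 3 * (3 + 1/10) * ((1/10)^3 * inv_sqrt_cube ((1/10) * (1/10) * 3 + 2 * (1/10) + 3))"
    by (rule tetrahedron_B_eq) simp_all
  have "inv_sqrt_cube ((1/10) * (1/10) * 3 + 2 * (1/10) + 3) \<le> 1"
    by (rule inv_sqrt_cube_le_1) simp
  then have "3 * (3 + 1/10) * ((1/10::real)^3 * inv_sqrt_cube ((1/10) * (1/10) * 3 + 2 * (1/10) + 3))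
      \<le> 3 * (3 + 1/10) * ((1/10)^3 * 1)"
    by (intro mult_left_mono) auto
  moreover have "(1/10::real)^3 / (sqrt 3 * (1 - 1/10)^2) \<le> (1/10)^3 / (1 * (1 - 1/10)^2)"
    using sqrt_3_bounds by (intro divide_left_mono mult_right_mono) auto
  moreover have "(1/10::real)^3 / (1 * (1 - 1/10)^2) + 3 * (3 + 1/10) * ((1/10)^3 * 1) < 9/20"
    by (simp add: power_divide)
  moreover have "9/20 \<le> 9 / (10 * sqrt 3)"
    using sqrt_3_bounds by (simp add: divide_simps)
  ultimately show ?thesis
    using B tetrahedron_A_bounds(1) by linarith
qed

lemma tetrahedron_B_above: "tetrahedron_A < (9/10)^3 * tetrahedron_B (9/10)"
proof -
  have B: "(9/10::real)^3 * tetrahedron_B (9/10) = (9/10)^3 / (sqrt 3 * (1 - 9/10)^2)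
      + 3 * (3 + 9/10) * ((9/10)^3 * inv_sqrt_cube ((9/10) * (9/10) * 3 + 2 * (9/10) + 3))"
    by (rule tetrahedron_B_eq) simp_all
  have "0 \<le> 3 * (3 + 9/10) * ((9/10::real)^3 * inv_sqrt_cube ((9/10) * (9/10) * 3 + 2 * (9/10) + 3))"
    using inv_sqrt_cube_pos[of "(9/10) * (9/10) * 3 + 2 * (9/10) + 3"] by simp
  moreover have "(9/10::real)^3 / (2 * (1 - 9/10)^2) \<le> (9/10)^3 / (sqrt 3 * (1 - 9/10)^2)"
    using sqrt_3_bounds by (intro divide_left_mono mult_right_mono) auto
  moreover have "3/2 < (9/10::real)^3 / (2 * (1 - 9/10)^2)"
    by (simp add: power_divide)
  ultimately show ?thesis
    using B tetrahedron_A_bounds(2) by linarith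
qed

lemma continuous_on_tetrahedron_B: "continuous_on {1/10..9/10} (\<lambda>t. t^3 * tetrahedron_B t)"
  unfolding tetrahedron_B_def
proof (intro continuous_intros)
  fix x :: real assume x: "x \<in> {1/10..9/10}"
  have "x * x * 3 - 6 * x + 3 = 3 * (1 - x)^2"
    by (simp add: power2_eq_square algebra_simps)
  then show "0 < x * x * 3 - 6 * x + 3"
    using x by simp
  show "0 < x * x * 3 + 2 * x + 3"
    using x by (simp add: add_pos_pos)
qed

lemma tetrahedron_cc_threshold: "\<exists>\<delta>. cc_threshold tetrahedron \<delta>"
proof -
  obtain \<delta> where \<delta>: "0 < \<delta>" "\<delta> < 1"
    "\<And>t. 0 < t \<Longrightarrow> t < \<delta> \<Longrightarrow> t^3 * tetrahedron_B t < tetrahedron_A"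
    "\<And>t. \<delta> < t \<Longrightarrow> t < 1 \<Longrightarrow> tetrahedron_A < t^3 * tetrahedron_B t"
    by (rule crossing_point[OF tetrahedron_B_mono _ _ _ tetrahedron_B_below tetrahedron_B_above
          continuous_on_tetrahedron_B]) auto
  have "cc_threshold tetrahedron \<delta>"
  proof (rule cc_thresholdI[where K = 12 and A = tetrahedron_A and B = tetrahedron_B and C = tetrahedron_C])
    show "cc_residual (nested tetrahedron t) (nested_masses (length tetrahedron) \<mu>) c 0 = 0"
      if "12 * c * (1 + \<mu>) = tetrahedron_A + \<mu> * tetrahedron_B t" for t \<mu> c
      using tetrahedron_residual_outer[where t = t and \<mu> = \<mu> and c = c] that by simp
    show "cc_residual (nested tetrahedron t) (nested_masses (length tetrahedron) \<mu>) c (length tetrahedron) = 0"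
      if "0 < t" "12 * c * t^2 * (1 + \<mu>) = tetrahedron_C t + \<mu> * tetrahedron_A / t" for t \<mu> c
      using tetrahedron_residual_inner[OF that(1), where \<mu> = \<mu> and c = c] that by simp
    show "virial_coeff tetrahedron t c (length tetrahedron) = tetrahedron_A / t - t^2 * tetrahedron_B t"
      if "0 < t" for t c
      using tetrahedron_virial_inner[OF that] by simp
  qed (use \<delta> tetrahedron_vertex_transitive tetrahedron_virial_outer tetrahedron_C_less in
        \<open>auto simp: tetrahedron_def\<close>)
  then show ?thesis ..
qed

section \<open>The octahedron\<close>

definition octahedron_A :: real where
  "octahedron_A = 4 * inv_sqrt_cube 2 + 2 * inv_sqrt_cube 4"

definition octahedron_B :: "real \<Rightarrow> real" where
  "octahedron_B t = (1 - t) * inv_sqrt_cube (t * t - 2 * t + 1)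
     + (1 + t) * inv_sqrt_cube (t * t + 2 * t + 1) + 4 * inv_sqrt_cube (t * t + 1)"

definition octahedron_C :: "real \<Rightarrow> real" where
  "octahedron_C t = t * (t - 1) * inv_sqrt_cube (t * t - 2 * t + 1)
     + t * (t + 1) * inv_sqrt_cube (t * t + 2 * t + 1) + 4 * t * t * inv_sqrt_cube (t * t + 1)"

lemma length_octahedron [simp]: "length octahedron = 6"
  by (simp add: octahedron_def)

lemma nested_masses_octahedron: "nested_masses 6 \<mu> = [1, 1, 1, 1, 1, 1, \<mu>, \<mu>, \<mu>, \<mu>, \<mu>, \<mu>]"
  by (simp add: nested_masses_def numeral_eq_Suc)

lemma octahedron_residual_outer:
  "cc_residual (nested octahedron t) (nested_masses 6 \<mu>) c 0
   = (6 * c * (1 + \<mu>) - octahedron_A - \<mu> * octahedron_B t) *\<^sub>R pt 1 0 0"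
  unfolding vec_eq_iff forall_3
  apply (intro conjI)
  apply (simp_all add: cc_residual_def nested_def octahedron_def nested_masses_octahedron octahedron_A_def
      octahedron_B_def lessThan_nat_numeral sum_component)
  apply algebra+
  done

lemma octahedron_residual_inner:
  assumes "0 < t"
  shows "t *\<^sub>R cc_residual (nested octahedron t) (nested_masses 6 \<mu>) c 6
   = (6 * c * t^2 * (1 + \<mu>) - octahedron_C t - \<mu> * octahedron_A / t) *\<^sub>R pt 1 0 0"
  unfolding vec_eq_iff forall_3
  apply (intro conjI)
  apply (simp_all add: cc_residual_def nested_def octahedron_def nested_masses_octahedron octahedron_A_def
      octahedron_C_def lessThan_nat_numeral sum_component assms inv_sqrt_cube_mult_square)
  apply (simp_all add: field_simps power3_eq_cube assms less_imp_neq[OF assms, symmetric])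
  apply algebra+
  done

lemma octahedron_virial_outer:
  assumes "0 < t"
  shows "virial_coeff octahedron t c 0 = octahedron_C t - t^2 * octahedron_A"
  using assms
  apply (simp add: virial_coeff_def nested_def octahedron_def octahedron_A_def octahedron_C_def
      lessThan_nat_numeral inner_vec3 inv_sqrt_cube_mult_square)
  apply (simp add: field_simps power3_eq_cube power2_eq_square)
  done

lemma octahedron_virial_inner:
  assumes "0 < t"
  shows "virial_coeff octahedron t c 6 = octahedron_A / t - t^2 * octahedron_B t"
  using assms
  apply (simp add: virial_coeff_def nested_def octahedron_def octahedron_A_def octahedron_B_def
      lessThan_nat_numeral inner_vec3 inv_sqrt_cube_mult_square)
  apply (simp add: field_simps power3_eq_cube power2_eq_square)
  done

lemma octahedron_vertex_transitive: "vertex_transitive octahedron"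
  by (rule vertex_transitiveI[where S = "[([0, 1, 2, 3, 4, 5], \<lambda>x. x),
      ([1, 0, 2, 3, 4, 5], signed_perm (-1) 1 1 1 2 3),
      ([2, 3, 0, 1, 4, 5], signed_perm 1 1 1 2 1 3),
      ([3, 2, 0, 1, 4, 5], signed_perm 1 (-1) 1 2 1 3),
      ([4, 5, 0, 1, 2, 3], signed_perm 1 1 1 2 3 1),
      ([5, 4, 0, 1, 2, 3], signed_perm 1 1 (-1) 2 3 1)]"])
    (simp_all add: point_symmetry_def octahedron_def numeral_eq_Suc All_less_Suc upt_rec)

lemma octahedron_A_bounds: "1 \<le> octahedron_A" "octahedron_A \<le> 6"
proof -
  have "sqrt 2 \<le> 2"
    by (simp add: real_le_lsqrt)
  then have "1/4 \<le> inv_sqrt_cube 2"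
    by (simp add: inv_sqrt_cube_eq divide_simps)
  moreover have "0 < inv_sqrt_cube 4"
    by (rule inv_sqrt_cube_pos) simp
  ultimately show "1 \<le> octahedron_A"
    by (simp add: octahedron_A_def)
  have "inv_sqrt_cube 2 \<le> 1" "inv_sqrt_cube 4 \<le> 1"
    by (rule inv_sqrt_cube_le_1, simp)+
  then show "octahedron_A \<le> 6"
    by (simp add: octahedron_A_def)
qed

lemma octahedron_C_eq:
  assumes "0 < t" "t < 1"
  shows "octahedron_C t = - (t / (1 - t)^2) + t / (1 + t)^2 + 4 * t * t * inv_sqrt_cube (t * t + 1)"
proof -
  define u where "u = 1 - t"
  define v where "v = 1 + t"
  have "u \<noteq> 0" "v \<noteq> 0"
    using assms by (auto simp: u_def v_def)
  then have "t * (- u) * (1 / u^3) = - (t / u^2)" "t * v * (1 / v^3) = t / v^2"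
    by (simp_all add: field_simps power3_eq_cube power2_eq_square)
  moreover have "t - 1 = - u" "t + 1 = v"
    by (simp_all add: u_def v_def)
  ultimately have "t * (t - 1) * (1 / u^3) = - (t / u^2)" "t * (t + 1) * (1 / v^3) = t / v^2"
    by simp_all
  then show ?thesis
    unfolding octahedron_C_def inv_sqrt_cube_one_minus[OF assms(2)] inv_sqrt_cube_one_plus[OF assms(1)]
    unfolding u_def v_def by simp
qed

lemma octahedron_C_less:
  assumes t: "0 < t" "t < 1"
  shows "octahedron_C t < t^2 * octahedron_A"
proof -
  define u where "u = 1 - t"
  define v where "v = 1 + t"
  have "t * t < 1"
    using t mult_strict_mono[of t 1 t 1] by simp
  then have uv: "0 < u" "0 < v" "0 < u * v" "u * v \<le> 1"
    using t by (auto simp: u_def v_def algebra_simps)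
  have "- (t / u^2) + t / v^2 = t * (u^2 - v^2) / (u * v)^2"
    using uv by (simp add: field_simps power2_eq_square)
  also have "\<dots> = - (4 * t^2) / (u * v)^2"
    by (simp add: u_def v_def power2_eq_square algebra_simps)
  also have "\<dots> \<le> - (4 * t^2)"
  proof -
    have "(u * v)^2 \<le> 1"
      using uv by (simp add: power_le_one)
    then have "4 * t^2 \<le> 4 * t^2 / (u * v)^2"
      using uv t by (simp add: le_divide_eq)
    then show ?thesis
      by simp
  qed
  finally have "- (t / u^2) + t / v^2 \<le> - (4 * t^2)" .
  moreover have "4 * t * t * inv_sqrt_cube (t * t + 1) \<le> 4 * t * t"
    using inv_sqrt_cube_le_1[of "t * t + 1"] t by (simp add: mult_left_le)
  ultimately have "octahedron_C t \<le> 0"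
    unfolding octahedron_C_eq[OF t] u_def v_def by (simp add: power2_eq_square)
  also have "0 < t^2 * octahedron_A"
    using octahedron_A_bounds t by simp
  finally show ?thesis .
qed

lemma octahedron_B_eq:
  assumes "0 < t" "t < 1"
  shows "t^3 * octahedron_B t = t^3 / (1 - t)^2 + t^3 / (1 + t)^2 + 4 * (t^3 * inv_sqrt_cube (t * t + 1))"
proof -
  define u where "u = 1 - t"
  define v where "v = 1 + t"
  have "u \<noteq> 0" "v \<noteq> 0"
    using assms by (auto simp: u_def v_def)
  then have e: "t^3 * (u * (1 / u^3)) = t^3 / u^2" "t^3 * (v * (1 / v^3)) = t^3 / v^2"
    by (simp_all add: field_simps power3_eq_cube power2_eq_square)
  have "t^3 * octahedron_B t = t^3 * (u * (1 / u^3)) + t^3 * (v * (1 / v^3))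
      + 4 * (t^3 * inv_sqrt_cube (t * t + 1))"
    unfolding octahedron_B_def inv_sqrt_cube_one_minus[OF assms(2)] inv_sqrt_cube_one_plus[OF assms(1)]
      u_def[symmetric] v_def[symmetric]
    by (simp add: algebra_simps)
  also have "\<dots> = t^3 / u^2 + t^3 / v^2 + 4 * (t^3 * inv_sqrt_cube (t * t + 1))"
    using e by simp
  finally show ?thesis
    unfolding u_def v_def .
qed

lemma octahedron_B_mono:
  assumes s: "0 < s" and st: "s < t" and t: "t < 1"
  shows "s^3 * octahedron_B s < t^3 * octahedron_B t"
proof -
  have "s^3 * inv_sqrt_cube (s * s + 1) < t^3 * inv_sqrt_cube (t * t + 1)"
    using cube_mult_inv_sqrt_cube_less[OF assms, of 1 0] by simp
  then show ?thesis
    using octahedron_B_eq[of s] octahedron_B_eq[of t] assms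
      cube_div_sq_one_minus_less[OF assms] cube_div_sq_one_plus_less[OF s st]
    by simp
qed

lemma octahedron_B_below: "(1/10)^3 * octahedron_B (1/10) < octahedron_A"
proof -
  have B: "(1/10::real)^3 * octahedron_B (1/10) = (1/10)^3 / (1 - 1/10)^2 + (1/10)^3 / (1 + 1/10)^2
      + 4 * ((1/10)^3 * inv_sqrt_cube ((1/10) * (1/10) + 1))"
    by (rule octahedron_B_eq) simp_all
  have "inv_sqrt_cube ((1/10) * (1/10) + 1) \<le> 1"
    by (rule inv_sqrt_cube_le_1) simp
  then have "4 * ((1/10::real)^3 * inv_sqrt_cube ((1/10) * (1/10) + 1)) \<le> 4 * ((1/10)^3 * 1)"
    by (intro mult_left_mono) auto
  moreover have "(1/10::real)^3 / (1 - 1/10)^2 + (1/10)^3 / (1 + 1/10)^2 + 4 * ((1/10)^3 * 1) < 1"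
    by (simp add: power_divide)
  ultimately show ?thesis
    using B octahedron_A_bounds(1) by linarith
qed

lemma octahedron_B_above: "octahedron_A < (9/10)^3 * octahedron_B (9/10)"
proof -
  have B: "(9/10::real)^3 * octahedron_B (9/10) = (9/10)^3 / (1 - 9/10)^2 + (9/10)^3 / (1 + 9/10)^2
      + 4 * ((9/10)^3 * inv_sqrt_cube ((9/10) * (9/10) + 1))"
    by (rule octahedron_B_eq) simp_all
  have "0 \<le> 4 * ((9/10::real)^3 * inv_sqrt_cube ((9/10) * (9/10) + 1))"
    using inv_sqrt_cube_pos[of "(9/10) * (9/10) + 1"] by simp
  moreover have "0 \<le> (9/10::real)^3 / (1 + 9/10)^2" "6 < (9/10::real)^3 / (1 - 9/10)^2"
    by (simp_all add: power_divide)
  ultimately show ?thesis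
    using B octahedron_A_bounds(2) by linarith
qed

lemma continuous_on_octahedron_B: "continuous_on {1/10..9/10} (\<lambda>t. t^3 * octahedron_B t)"
  unfolding octahedron_B_def
proof (intro continuous_intros)
  fix x :: real assume x: "x \<in> {1/10..9/10}"
  have "x * x - 2 * x + 1 = (1 - x)^2"
    by (simp add: power2_eq_square algebra_simps)
  then show "0 < x * x - 2 * x + 1"
    using x by simp
  show "0 < x * x + 2 * x + 1" "0 < x * x + 1"
    using x by (simp_all add: add_pos_pos)
qed

lemma octahedron_cc_threshold: "\<exists>\<delta>. cc_threshold octahedron \<delta>"
proof -
  obtain \<delta> where \<delta>: "0 < \<delta>" "\<delta> < 1"
    "\<And>t. 0 < t \<Longrightarrow> t < \<delta> \<Longrightarrow> t^3 * octahedron_B t < octahedron_A"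
    "\<And>t. \<delta> < t \<Longrightarrow> t < 1 \<Longrightarrow> octahedron_A < t^3 * octahedron_B t"
    by (rule crossing_point[OF octahedron_B_mono _ _ _ octahedron_B_below octahedron_B_above
          continuous_on_octahedron_B]) auto
  have "cc_threshold octahedron \<delta>"
  proof (rule cc_thresholdI[where K = 6 and A = octahedron_A and B = octahedron_B and C = octahedron_C])
    show "cc_residual (nested octahedron t) (nested_masses (length octahedron) \<mu>) c 0 = 0"
      if "6 * c * (1 + \<mu>) = octahedron_A + \<mu> * octahedron_B t" for t \<mu> c
      using octahedron_residual_outer[where t = t and \<mu> = \<mu> and c = c] that by simp
    show "cc_residual (nested octahedron t) (nested_masses (length octahedron) \<mu>) c (length octahedron) = 0"
      if "0 < t" "6 * c * t^2 * (1 + \<mu>) = octahedron_C t + \<mu> * octahedron_A / t" for t \<mu> c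
      using octahedron_residual_inner[OF that(1), where \<mu> = \<mu> and c = c] that by simp
    show "virial_coeff octahedron t c (length octahedron) = octahedron_A / t - t^2 * octahedron_B t"
      if "0 < t" for t c
      using octahedron_virial_inner[OF that] by simp
  qed (use \<delta> octahedron_vertex_transitive octahedron_virial_outer octahedron_C_less in
        \<open>auto simp: octahedron_def\<close>)
  then show ?thesis ..
qed

section \<open>The cube\<close>

definition cube_A :: real where
  "cube_A = 6 * inv_sqrt_cube 4 + 12 * inv_sqrt_cube 8 + 6 * inv_sqrt_cube 12"

definition cube_B :: "real \<Rightarrow> real" where
  "cube_B t = (3 - 3 * t) * inv_sqrt_cube (t * t * 3 - 6 * t + 3)
     + (3 + 3 * t) * inv_sqrt_cube (t * t * 3 + 6 * t + 3)
     + 3 * (3 - t) * inv_sqrt_cube (t * t * 3 - 2 * t + 3)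
     + 3 * (3 + t) * inv_sqrt_cube (t * t * 3 + 2 * t + 3)"

definition cube_C :: "real \<Rightarrow> real" where
  "cube_C t = t * (3 * t - 3) * inv_sqrt_cube (t * t * 3 - 6 * t + 3)
     + t * (3 * t + 3) * inv_sqrt_cube (t * t * 3 + 6 * t + 3)
     + 3 * t * (3 * t - 1) * inv_sqrt_cube (t * t * 3 - 2 * t + 3)
     + 3 * t * (3 * t + 1) * inv_sqrt_cube (t * t * 3 + 2 * t + 3)"

lemma length_cube [simp]: "length cube = 8"
  by (simp add: cube_def)

lemma nested_masses_cube:
  "nested_masses 8 \<mu> = [1, 1, 1, 1, 1, 1, 1, 1, \<mu>, \<mu>, \<mu>, \<mu>, \<mu>, \<mu>, \<mu>, \<mu>]"
  by (simp add: nested_masses_def numeral_eq_Suc)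

lemma cube_residual_outer:
  "3 *\<^sub>R cc_residual (nested cube t) (nested_masses 8 \<mu>) c 0
   = (24 * c * (1 + \<mu>) - cube_A - \<mu> * cube_B t) *\<^sub>R pt 1 1 1"
  unfolding vec_eq_iff forall_3
  apply (intro conjI)
  apply (simp_all add: cc_residual_def nested_def cube_def nested_masses_cube cube_A_def cube_B_def
      lessThan_nat_numeral sum_component)
  apply algebra+
  done

lemma cube_residual_inner:
  assumes "0 < t"
  shows "(3 * t) *\<^sub>R cc_residual (nested cube t) (nested_masses 8 \<mu>) c 8
   = (24 * c * t^2 * (1 + \<mu>) - cube_C t - \<mu> * cube_A / t) *\<^sub>R pt 1 1 1"
  unfolding vec_eq_iff forall_3
  apply (intro conjI)
  apply (simp_all add: cc_residual_def nested_def cube_def nested_masses_cube cube_A_def cube_C_def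
      lessThan_nat_numeral sum_component assms inv_sqrt_cube_mult_square)
  apply (simp_all add: field_simps power3_eq_cube assms less_imp_neq[OF assms, symmetric])
  apply algebra+
  done

lemma cube_virial_outer:
  assumes "0 < t"
  shows "virial_coeff cube t c 0 = cube_C t - t^2 * cube_A"
  using assms
  apply (simp add: virial_coeff_def nested_def cube_def cube_A_def cube_C_def
      lessThan_nat_numeral inner_vec3 inv_sqrt_cube_mult_square)
  apply (simp add: field_simps power3_eq_cube power2_eq_square)
  done

lemma cube_virial_inner:
  assumes "0 < t"
  shows "virial_coeff cube t c 8 = cube_A / t - t^2 * cube_B t"
  using assms
  apply (simp add: virial_coeff_def nested_def cube_def cube_A_def cube_B_def
      lessThan_nat_numeral inner_vec3 inv_sqrt_cube_mult_square)
  apply (simp add: field_simps power3_eq_cube power2_eq_square)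
  done

lemma cube_vertex_transitive: "vertex_transitive cube"
  by (rule vertex_transitiveI[where S = "[([0, 1, 2, 3, 4, 5, 6, 7], \<lambda>x. x),
      ([1, 0, 3, 2, 5, 4, 7, 6], signed_perm 1 1 (-1) 1 2 3),
      ([2, 3, 0, 1, 6, 7, 4, 5], signed_perm 1 (-1) 1 1 2 3),
      ([3, 2, 1, 0, 7, 6, 5, 4], signed_perm 1 (-1) (-1) 1 2 3),
      ([4, 5, 6, 7, 0, 1, 2, 3], signed_perm (-1) 1 1 1 2 3),
      ([5, 4, 7, 6, 1, 0, 3, 2], signed_perm (-1) 1 (-1) 1 2 3),
      ([6, 7, 4, 5, 2, 3, 0, 1], signed_perm (-1) (-1) 1 1 2 3),
      ([7, 6, 5, 4, 3, 2, 1, 0], signed_perm (-1) (-1) (-1) 1 2 3)]"])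
    (simp_all add: point_symmetry_def cube_def numeral_eq_Suc All_less_Suc upt_rec)

lemma cube_A_bounds: "12 / (5 * sqrt 3) \<le> cube_A" "cube_A \<le> 24"
proof -
  have "inv_sqrt_cube 4 = 1/8"
    by (simp add: inv_sqrt_cube_eq)
  moreover have "sqrt 12 = 2 * sqrt 3"
    using real_sqrt_mult[of 4 3] by simp
  then have "6 * inv_sqrt_cube 12 = 1 / (4 * sqrt 3)"
    by (simp add: inv_sqrt_cube_eq)
  moreover have "9 / (10 * sqrt 3) \<le> 12 * inv_sqrt_cube 8"
    using tetrahedron_A_bounds(1) unfolding tetrahedron_A_def .
  moreover have "12 / (5 * sqrt 3) \<le> 3/4 + 9 / (10 * sqrt 3) + 1 / (4 * sqrt 3)"
    using sqrt_3_bounds(3) by (simp add: divide_simps)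
  ultimately show "12 / (5 * sqrt 3) \<le> cube_A"
    unfolding cube_A_def by linarith
  have "inv_sqrt_cube 4 \<le> 1" "inv_sqrt_cube 8 \<le> 1" "inv_sqrt_cube 12 \<le> 1"
    by (rule inv_sqrt_cube_le_1, simp)+
  then show "cube_A \<le> 24"
    unfolding cube_A_def by simp
qed

lemma cube_edge_quadratic_pos: "0 < (t::real) * t * 3 - 2 * t + 3"
proof -
  have "t * t * 3 - 2 * t + 3 = 3 * (t - 1/3)^2 + 8/3"
    by (simp add: power2_eq_square algebra_simps)
  then show ?thesis
    by (simp add: add_nonneg_pos)
qed

definition cube_C_bound :: "real \<Rightarrow> real" where
  "cube_C_bound t = 1 / (1 + t)^2 - 1 / (1 - t)^2
     + 9 * t * ((t * t * 3 - 2 * t + 3) + 3) / (2 * (t * t * 3 - 2 * t + 3)^2)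
     - 18 / ((t * t * 3 - 2 * t + 3) * ((t * t * 3 - 2 * t + 3) + 3))
     + 3 * (3 * t + 1) * ((t * t * 3 + 2 * t + 3) + 3) / (2 * (t * t * 3 + 2 * t + 3)^2)"

lemma cube_C_le_bound:
  assumes t: "0 < t" "t < 1"
  shows "cube_C t \<le> (t / sqrt 3) * cube_C_bound t"
proof -
  define r where "r = sqrt 3"
  have r: "0 < r" "r^2 = 3" "r * r = 3"
    unfolding r_def by simp_all
  define wm where "wm = t * t * 3 - 2 * t + 3"
  define wp where "wp = t * t * 3 + 2 * t + 3"
  have w: "0 < wm" "0 < wp"
    unfolding wm_def wp_def using t cube_edge_quadratic_pos[of t] by (simp_all add: add_pos_pos)
  define u where "u = 1 - t"
  define v where "v = 1 + t"
  have uv: "0 < u" "0 < v" "3 * t - 3 = - 3 * u" "3 * t + 3 = 3 * v"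
    using t by (simp_all add: u_def v_def)
  have "t * (- 3 * u) * (1 / (3 * r * u^3)) = - ((t / r) * (1 / u^2))"
    "t * (3 * v) * (1 / (3 * r * v^3)) = (t / r) * (1 / v^2)"
    using uv r by (simp_all add: field_simps power3_eq_cube power2_eq_square)
  then have C: "cube_C t = - ((t / r) * (1 / u^2)) + (t / r) * (1 / v^2)
      + (9 * t^2 * inv_sqrt_cube wm - 3 * t * inv_sqrt_cube wm) + 3 * t * (3 * t + 1) * inv_sqrt_cube wp"
    unfolding cube_C_def inv_sqrt_cube_3_one_minus[OF t(2)] inv_sqrt_cube_3_one_plus[OF t(1)]
      wm_def[symmetric] wp_def[symmetric] r_def[symmetric] u_def[symmetric] v_def[symmetric] uv(3,4)
    by (simp add: algebra_simps power2_eq_square)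
  \<comment> \<open>tangent-line bounds at \<open>s = 3\<close>, the lower one for the only term with a negative coefficient\<close>
  have "9 * t^2 * inv_sqrt_cube wm \<le> 9 * t^2 * ((wm + 3) / (2 * r * wm^2))"
    using inv_sqrt_cube_upper[OF w(1) r(1)] r(2) t by (intro mult_left_mono) auto
  moreover have "3 * t * (2 * r / (wm * (wm + 3))) \<le> 3 * t * inv_sqrt_cube wm"
    using inv_sqrt_cube_lower[OF w(1) r(1)] r(2) t by (intro mult_left_mono) auto
  moreover have "3 * t * (3 * t + 1) * inv_sqrt_cube wp \<le> 3 * t * (3 * t + 1) * ((wp + 3) / (2 * r * wp^2))"
    using inv_sqrt_cube_upper[OF w(2) r(1)] r(2) t by (intro mult_left_mono) auto
  moreover have "9 * t^2 * ((wm + 3) / (2 * r * wm^2)) = (t / r) * (9 * t * (wm + 3) / (2 * wm^2))"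
    "3 * t * (2 * r / (wm * (wm + 3))) = (t / r) * (6 * (r * r) / (wm * (wm + 3)))"
    "3 * t * (3 * t + 1) * ((wp + 3) / (2 * r * wp^2)) = (t / r) * (3 * (3 * t + 1) * (wp + 3) / (2 * wp^2))"
    using r(1) w by (simp_all add: field_simps power2_eq_square)
  moreover have "(t / r) * cube_C_bound t = (t / r) * (1 / v^2) - (t / r) * (1 / u^2)
      + (t / r) * (9 * t * (wm + 3) / (2 * wm^2)) - (t / r) * (18 / (wm * (wm + 3)))
      + (t / r) * (3 * (3 * t + 1) * (wp + 3) / (2 * wp^2))"
    unfolding cube_C_bound_def wm_def[symmetric] wp_def[symmetric] u_def[symmetric] v_def[symmetric]
    by (simp add: algebra_simps)
  ultimately show ?thesis
    using C r(3) unfolding r_def by simp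
qed

text \<open>Clearing denominators, \<open>12 t / 5 - cube_C_bound t\<close> becomes \<open>t Q(t)\<close> divided by a positive
  polynomial, where \<open>Q\<close> has positive coefficients in the Bernstein basis \<open>t\<^sup>k (1 - t)\<^sup>1\<^sup>4\<^sup>-\<^sup>k\<close>.\<close>

lemma cube_polynomial_pos:
  fixes t u v wm wp :: real
  assumes t: "0 < t" "t < 1"
    and defs: "u = 1 - t" "v = 1 + t" "wm = t * t * 3 - 2 * t + 3" "wp = t * t * 3 + 2 * t + 3"
  shows "0 < (24/5) * t * u^2 * v^2 * wm^2 * (wm + 3) * wp^2 + 2 * v^2 * wm^2 * (wm + 3) * wp^2
     - 2 * u^2 * wm^2 * (wm + 3) * wp^2 - 9 * t * (wm + 3)^2 * u^2 * v^2 * wp^2 + 36 * u^2 * v^2 * wm * wp^2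
     - 3 * (3 * t + 1) * (wp + 3) * u^2 * v^2 * wm^2 * (wm + 3)"
proof -
  define Q where "Q = (11664/5) * (1-t)^14 + (158868/5) * t * (1-t)^13 + (1061532/5) * t^2 * (1-t)^12
    + (4576101/5) * t^3 * (1-t)^11 + (14193153/5) * t^4 * (1-t)^10 + (33498823/5) * t^5 * (1-t)^9
    + (61946463/5) * t^6 * (1-t)^8 + (90809856/5) * t^7 * (1-t)^7 + (105418476/5) * t^8 * (1-t)^6
    + 19159152 * t^9 * (1-t)^5 + (66647424/5) * t^10 * (1-t)^4 + 6844992 * t^11 * (1-t)^3
    + (12208128/5) * t^12 * (1-t)^2 + 540672 * t^13 * (1-t) + 57344 * t^14"
  have "0 < Q"
    unfolding Q_def using t
    by (intro add_pos_nonneg mult_pos_pos mult_nonneg_nonneg zero_less_power zero_le_power) auto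
  moreover have "(24/5) * t * u^2 * v^2 * wm^2 * (wm + 3) * wp^2 + 2 * v^2 * wm^2 * (wm + 3) * wp^2
     - 2 * u^2 * wm^2 * (wm + 3) * wp^2 - 9 * t * (wm + 3)^2 * u^2 * v^2 * wp^2 + 36 * u^2 * v^2 * wm * wp^2
     - 3 * (3 * t + 1) * (wp + 3) * u^2 * v^2 * wm^2 * (wm + 3) = t * Q"
    unfolding Q_def defs by algebra
  ultimately show ?thesis
    using t by simp
qed

lemma cube_C_bound_less:
  assumes t: "0 < t" "t < 1"
  shows "cube_C_bound t < 12 * t / 5"
proof -
  define wm where "wm = t * t * 3 - 2 * t + 3"
  define wp where "wp = t * t * 3 + 2 * t + 3"
  define u where "u = 1 - t"
  define v where "v = 1 + t"
  have pos: "0 < wm" "0 < wp" "0 < u" "0 < v"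
    unfolding wm_def wp_def u_def v_def using t cube_edge_quadratic_pos[of t] by (simp_all add: add_pos_pos)
  define D where "D = 2 * u^2 * v^2 * wm^2 * (wm + 3) * wp^2"
  have "0 < D"
    unfolding D_def using pos by (simp add: add_pos_pos)
  have D: "D * (12 * t / 5) = (24/5) * t * u^2 * v^2 * wm^2 * (wm + 3) * wp^2"
    "D * (1 / u^2) = 2 * v^2 * wm^2 * (wm + 3) * wp^2"
    "D * (1 / v^2) = 2 * u^2 * wm^2 * (wm + 3) * wp^2"
    "D * (9 * t * (wm + 3) / (2 * wm^2)) = 9 * t * (wm + 3)^2 * u^2 * v^2 * wp^2"
    "D * (3 * (3 * t + 1) * (wp + 3) / (2 * wp^2)) = 3 * (3 * t + 1) * (wp + 3) * u^2 * v^2 * wm^2 * (wm + 3)"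
    unfolding D_def using pos by (simp_all add: field_simps power2_eq_square)
  have "D = (wm * (wm + 3)) * (2 * u^2 * v^2 * wm * wp^2)"
    unfolding D_def by (simp add: power2_eq_square algebra_simps)
  moreover have "wm * (wm + 3) \<noteq> 0"
    using pos by simp
  ultimately have D18: "D * (18 / (wm * (wm + 3))) = 36 * u^2 * v^2 * wm * wp^2"
    by simp
  have "D * (12 * t / 5 - cube_C_bound t)
      = D * (12 * t / 5) + D * (1 / u^2) - D * (1 / v^2) - D * (9 * t * (wm + 3) / (2 * wm^2))
        + D * (18 / (wm * (wm + 3))) - D * (3 * (3 * t + 1) * (wp + 3) / (2 * wp^2))"
    unfolding cube_C_bound_def wm_def[symmetric] wp_def[symmetric] u_def[symmetric] v_def[symmetric]
    by (simp add: algebra_simps)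
  also have "\<dots> > 0"
    unfolding D D18 using cube_polynomial_pos[OF t u_def v_def wm_def wp_def] by linarith
  finally show ?thesis
    using \<open>0 < D\<close> by (simp add: zero_less_mult_iff)
qed

lemma cube_C_less:
  assumes t: "0 < t" "t < 1"
  shows "cube_C t < t^2 * cube_A"
proof -
  have "cube_C t \<le> (t / sqrt 3) * cube_C_bound t"
    by (rule cube_C_le_bound[OF t])
  also have "\<dots> < (t / sqrt 3) * (12 * t / 5)"
    using cube_C_bound_less[OF t] t by (intro mult_strict_left_mono) auto
  also have "\<dots> = t^2 * (12 / (5 * sqrt 3))"
    by (simp add: power2_eq_square)
  also have "\<dots> \<le> t^2 * cube_A"
    using cube_A_bounds(1) by (intro mult_left_mono) auto
  finally show ?thesis .
qed

lemma cube_B_eq: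
  assumes "0 < t" "t < 1"
  shows "t^3 * cube_B t = t^3 / (sqrt 3 * (1 - t)^2) + t^3 / (sqrt 3 * (1 + t)^2)
    + 3 * ((3 - t) * (t^3 * inv_sqrt_cube (t * t * 3 - 2 * t + 3)))
    + 3 * (3 + t) * (t^3 * inv_sqrt_cube (t * t * 3 + 2 * t + 3))"
proof -
  define u where "u = 1 - t"
  define v where "v = 1 + t"
  have "u \<noteq> 0" "v \<noteq> 0" "3 - 3 * t = 3 * u" "3 + 3 * t = 3 * v"
    using assms by (simp_all add: u_def v_def)
  then have e: "t^3 * ((3 * u) * (1 / (3 * sqrt 3 * u^3))) = t^3 / (sqrt 3 * u^2)"
    "t^3 * ((3 * v) * (1 / (3 * sqrt 3 * v^3))) = t^3 / (sqrt 3 * v^2)"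
    by (simp_all add: field_simps power3_eq_cube power2_eq_square)
  have "t^3 * cube_B t = t^3 * ((3 * u) * (1 / (3 * sqrt 3 * u^3))) + t^3 * ((3 * v) * (1 / (3 * sqrt 3 * v^3)))
      + 3 * ((3 - t) * (t^3 * inv_sqrt_cube (t * t * 3 - 2 * t + 3)))
      + 3 * (3 + t) * (t^3 * inv_sqrt_cube (t * t * 3 + 2 * t + 3))"
    unfolding cube_B_def inv_sqrt_cube_3_one_minus[OF assms(2)] inv_sqrt_cube_3_one_plus[OF assms(1)]
      \<open>3 - 3 * t = 3 * u\<close> \<open>3 + 3 * t = 3 * v\<close> u_def[symmetric] v_def[symmetric]
    by (simp add: algebra_simps)
  also have "\<dots> = t^3 / (sqrt 3 * u^2) + t^3 / (sqrt 3 * v^2)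
      + 3 * ((3 - t) * (t^3 * inv_sqrt_cube (t * t * 3 - 2 * t + 3)))
      + 3 * (3 + t) * (t^3 * inv_sqrt_cube (t * t * 3 + 2 * t + 3))"
    using e by simp
  finally show ?thesis
    unfolding u_def v_def .
qed

text \<open>Unlike the other summands of \<open>t\<^sup>3 B(t)\<close>, this one has a decreasing factor \<open>3 - t\<close>; writing it as
  \<open>(t\<^sup>2/w) sqrt ((t/w) t (3 - t)\<^sup>2)\<close> exhibits it as a product of increasing functions.\<close>

lemma edge_term_eq:
  fixes x w :: real
  assumes "0 < x" "x < 3" "0 < w"
  shows "(3 - x) * (x^3 * inv_sqrt_cube w) = (x^2 / w) * sqrt ((x / w) * (x * (3 - x)^2))"
proof -
  have "sqrt ((x / w) * (x * (3 - x)^2)) = sqrt ((x * (3 - x))^2 / w)"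
    by (simp add: power2_eq_square)
  also have "\<dots> = x * (3 - x) / sqrt w"
    using assms by (simp add: real_sqrt_divide)
  finally have sqrt_eq: "sqrt ((x / w) * (x * (3 - x)^2)) = x * (3 - x) / sqrt w" .
  have "0 < sqrt w"
    using assms by simp
  then show ?thesis
    unfolding sqrt_eq inv_sqrt_cube_eq[OF assms(3)] using assms(3)
    by (simp add: field_simps power2_eq_square power3_eq_cube)
qed

lemma cube_edge_term_less:
  fixes s t :: real
  assumes s: "0 < s" and st: "s < t" and t: "t < 1"
  shows "(3 - s) * (s^3 * inv_sqrt_cube (s * s * 3 - 2 * s + 3))
    < (3 - t) * (t^3 * inv_sqrt_cube (t * t * 3 - 2 * t + 3))"
proof -
  define w where "w = (\<lambda>x::real. x * x * 3 - 2 * x + 3)"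
  have w: "0 < w x" for x
    unfolding w_def by (rule cube_edge_quadratic_pos)
  have "s * t < 1"
    using s st t mult_strict_mono[of t 1 s 1] by (simp add: mult.commute)
  have square_ratio: "s^2 / w s < t^2 / w t"
    using square_div_quadratic_less[OF s st t, of 3 1] by (simp add: w_def algebra_simps)
  have ratio: "s / w s < t / w t"
  proof -
    have "t * w s - s * w t = 3 * (t - s) * (1 - t * s)"
      by (simp add: w_def algebra_simps)
    moreover have "0 < 3 * (t - s) * (1 - t * s)"
      using st \<open>s * t < 1\<close> by (simp add: mult.commute)
    ultimately show ?thesis
      using w[of s] w[of t] by (simp add: divide_simps)
  qed
  have cubic: "s * (3 - s)^2 < t * (3 - t)^2"
  proof -
    have "t * (3 - t)^2 - s * (3 - s)^2 = (t - s) * ((3 - t - s)^2 - t * s)"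
      by (simp add: power2_eq_square algebra_simps)
    moreover have "1 < (3 - t - s)^2"
      using s st t by (simp add: one_less_power)
    then have "0 < (t - s) * ((3 - t - s)^2 - t * s)"
      using st \<open>s * t < 1\<close> by (simp add: mult.commute)
    ultimately show ?thesis
      by linarith
  qed
  have "(s / w s) * (s * (3 - s)^2) < (t / w t) * (t * (3 - t)^2)"
    by (rule mult_strict_mono[OF ratio cubic]) (use s st w[of t] in auto)
  then have "sqrt ((s / w s) * (s * (3 - s)^2)) < sqrt ((t / w t) * (t * (3 - t)^2))"
    by (rule real_sqrt_less_mono)
  then have "(s^2 / w s) * sqrt ((s / w s) * (s * (3 - s)^2)) < (t^2 / w t) * sqrt ((t / w t) * (t * (3 - t)^2))"
    by (rule mult_strict_mono[OF square_ratio]) (use s st w[of s] w[of t] in auto)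
  then show ?thesis
    using edge_term_eq[of s "w s"] edge_term_eq[of t "w t"] w[of s] w[of t] s st t by (simp add: w_def)
qed

lemma cube_B_mono:
  assumes s: "0 < s" and st: "s < t" and t: "t < 1"
  shows "s^3 * cube_B s < t^3 * cube_B t"
proof -
  have "s^3 * inv_sqrt_cube (s * s * 3 + 2 * s + 3) < t^3 * inv_sqrt_cube (t * t * 3 + 2 * t + 3)"
    using cube_mult_inv_sqrt_cube_less[OF assms, of 3 "-1"] by (simp add: algebra_simps)
  moreover have "0 \<le> s^3 * inv_sqrt_cube (s * s * 3 + 2 * s + 3)"
    using s inv_sqrt_cube_pos[of "s * s * 3 + 2 * s + 3"] by (simp add: add_pos_pos)
  ultimately have "3 * (3 + s) * (s^3 * inv_sqrt_cube (s * s * 3 + 2 * s + 3))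
      < 3 * (3 + t) * (t^3 * inv_sqrt_cube (t * t * 3 + 2 * t + 3))"
    using s st by (rule_tac mult_strict_mono) auto
  moreover have "s^3 / (sqrt 3 * (1 + s)^2) < t^3 / (sqrt 3 * (1 + t)^2)"
    using divide_strict_right_mono[OF cube_div_sq_one_plus_less[OF s st], of "sqrt 3"]
    by (simp add: divide_divide_eq_left mult.commute)
  ultimately show ?thesis
    using cube_B_eq[of s] cube_B_eq[of t] assms
      cube_div_sqrt_3_sq_one_minus_less[OF assms] cube_edge_term_less[OF assms]
    by simp
qed

lemma cube_B_below: "(1/10)^3 * cube_B (1/10) < cube_A"
proof -
  have B: "(1/10::real)^3 * cube_B (1/10) = (1/10)^3 / (sqrt 3 * (1 - 1/10)^2) + (1/10)^3 / (sqrt 3 * (1 + 1/10)^2)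
      + 3 * ((3 - 1/10) * ((1/10)^3 * inv_sqrt_cube ((1/10) * (1/10) * 3 - 2 * (1/10) + 3)))
      + 3 * (3 + 1/10) * ((1/10)^3 * inv_sqrt_cube ((1/10) * (1/10) * 3 + 2 * (1/10) + 3))"
    by (rule cube_B_eq) simp_all
  have "inv_sqrt_cube ((1/10) * (1/10) * 3 - 2 * (1/10) + 3) \<le> 1"
    "inv_sqrt_cube ((1/10) * (1/10) * 3 + 2 * (1/10) + 3) \<le> 1"
    by (rule inv_sqrt_cube_le_1, simp)+
  then have "3 * ((3 - 1/10) * ((1/10::real)^3 * inv_sqrt_cube ((1/10) * (1/10) * 3 - 2 * (1/10) + 3)))
      \<le> 3 * ((3 - 1/10) * ((1/10)^3 * 1))"
    "3 * (3 + 1/10) * ((1/10::real)^3 * inv_sqrt_cube ((1/10) * (1/10) * 3 + 2 * (1/10) + 3))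
      \<le> 3 * (3 + 1/10) * ((1/10)^3 * 1)"
    by (intro mult_left_mono; simp)+
  moreover have "(1/10::real)^3 / (sqrt 3 * (1 - 1/10)^2) \<le> (1/10)^3 / (1 * (1 - 1/10)^2)"
    "(1/10::real)^3 / (sqrt 3 * (1 + 1/10)^2) \<le> (1/10)^3 / (1 * (1 + 1/10)^2)"
    using sqrt_3_bounds by (intro divide_left_mono mult_right_mono; simp)+
  moreover have "(1/10::real)^3 / (1 * (1 - 1/10)^2) + (1/10)^3 / (1 * (1 + 1/10)^2)
      + 3 * ((3 - 1/10) * ((1/10)^3 * 1)) + 3 * (3 + 1/10) * ((1/10)^3 * 1) < 6/5"
    by (simp add: power_divide)
  moreover have "6/5 \<le> 12 / (5 * sqrt 3)"
    using sqrt_3_bounds by (simp add: divide_simps)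
  ultimately show ?thesis
    using B cube_A_bounds(1) by linarith
qed

lemma cube_B_above: "cube_A < (9/10)^3 * cube_B (9/10)"
proof -
  have B: "(9/10::real)^3 * cube_B (9/10) = (9/10)^3 / (sqrt 3 * (1 - 9/10)^2) + (9/10)^3 / (sqrt 3 * (1 + 9/10)^2)
      + 3 * ((3 - 9/10) * ((9/10)^3 * inv_sqrt_cube ((9/10) * (9/10) * 3 - 2 * (9/10) + 3)))
      + 3 * (3 + 9/10) * ((9/10)^3 * inv_sqrt_cube ((9/10) * (9/10) * 3 + 2 * (9/10) + 3))"
    by (rule cube_B_eq) simp_all
  have "0 \<le> 3 * ((3 - 9/10) * ((9/10::real)^3 * inv_sqrt_cube ((9/10) * (9/10) * 3 - 2 * (9/10) + 3)))"
    "0 \<le> 3 * (3 + 9/10) * ((9/10::real)^3 * inv_sqrt_cube ((9/10) * (9/10) * 3 + 2 * (9/10) + 3))"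
    using inv_sqrt_cube_pos[of "(9/10) * (9/10) * 3 - 2 * (9/10) + 3"]
      inv_sqrt_cube_pos[of "(9/10) * (9/10) * 3 + 2 * (9/10) + 3"] by simp_all
  moreover have "0 \<le> (9/10::real)^3 / (sqrt 3 * (1 + 9/10)^2)"
    by simp
  moreover have "(9/10::real)^3 / (2 * (1 - 9/10)^2) \<le> (9/10)^3 / (sqrt 3 * (1 - 9/10)^2)"
    using sqrt_3_bounds by (intro divide_left_mono mult_right_mono) auto
  moreover have "24 < (9/10::real)^3 / (2 * (1 - 9/10)^2)"
    by (simp add: power_divide)
  ultimately show ?thesis
    using B cube_A_bounds(2) by linarith
qed

lemma continuous_on_cube_B: "continuous_on {1/10..9/10} (\<lambda>t. t^3 * cube_B t)"
  unfolding cube_B_def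
proof (intro continuous_intros)
  fix x :: real assume x: "x \<in> {1/10..9/10}"
  have "x * x * 3 - 6 * x + 3 = 3 * (1 - x)^2"
    by (simp add: power2_eq_square algebra_simps)
  then show "0 < x * x * 3 - 6 * x + 3"
    using x by simp
  show "0 < x * x * 3 + 6 * x + 3" "0 < x * x * 3 + 2 * x + 3"
    using x by (simp_all add: add_pos_pos)
  show "0 < x * x * 3 - 2 * x + 3"
    by (rule cube_edge_quadratic_pos)
qed

lemma cube_cc_threshold: "\<exists>\<delta>. cc_threshold cube \<delta>"
proof -
  obtain \<delta> where \<delta>: "0 < \<delta>" "\<delta> < 1"
    "\<And>t. 0 < t \<Longrightarrow> t < \<delta> \<Longrightarrow> t^3 * cube_B t < cube_A"
    "\<And>t. \<delta> < t \<Longrightarrow> t < 1 \<Longrightarrow> cube_A < t^3 * cube_B t"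
    by (rule crossing_point[OF cube_B_mono _ _ _ cube_B_below cube_B_above continuous_on_cube_B]) auto
  have "cc_threshold cube \<delta>"
  proof (rule cc_thresholdI[where K = 24 and A = cube_A and B = cube_B and C = cube_C])
    show "cc_residual (nested cube t) (nested_masses (length cube) \<mu>) c 0 = 0"
      if "24 * c * (1 + \<mu>) = cube_A + \<mu> * cube_B t" for t \<mu> c
      using cube_residual_outer[where t = t and \<mu> = \<mu> and c = c] that by simp
    show "cc_residual (nested cube t) (nested_masses (length cube) \<mu>) c (length cube) = 0"
      if "0 < t" "24 * c * t^2 * (1 + \<mu>) = cube_C t + \<mu> * cube_A / t" for t \<mu> c
      using cube_residual_inner[OF that(1), where \<mu> = \<mu> and c = c] that by simp
    show "virial_coeff cube t c (length cube) = cube_A / t - t^2 * cube_B t" if "0 < t" for t c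
      using cube_virial_inner[OF that] by simp
  qed (use \<delta> cube_vertex_transitive cube_virial_outer cube_C_less in \<open>auto simp: cube_def\<close>)
  then show ?thesis ..
qed

theorem theorem14:
  shows "\<forall>P \<in> {tetrahedron, octahedron, cube}.
    \<exists>\<delta>::real. 0 < \<delta> \<and> \<delta> < 1 \<and>
      (\<forall>t. 0 < t \<and> t < \<delta> \<longrightarrow>
         (\<exists>m. length m = 2 * length P \<and> (\<forall>x\<in>set m. 0 < x) \<and>
              central_configuration (nested P t) m)) \<and>
      (\<forall>t. \<delta> < t \<and> t < 1 \<longrightarrow>
         \<not> (\<exists>m. length m = 2 * length P \<and> (\<forall>x\<in>set m. 0 < x) \<and>
              central_configuration (nested P t) m))"
proof -
  have "\<exists>\<delta>. cc_threshold P \<delta>" if "P \<in> {tetrahedron, octahedron, cube}" for P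
    using that tetrahedron_cc_threshold octahedron_cc_threshold cube_cc_threshold by auto
  then show ?thesis
    unfolding cc_threshold_def nested_cc_def by blast
qed

end
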